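(* Let $m\ge2$, $k\ge1$, $b=k(m^2-m)$, and let $\Delta$ be the simplicial complex whose Stanley–Reisner ring is $S/\mathrm{LM}(\mathcal I^{m,m}_{m,k})$. Then $\Delta$ has dimension $k(m^2-1)-1$, and for $1\le l\le k(m^2-1)$ the number $f_{l-1}$ of $(l-1)$-dimensional faces of $\Delta$ (faces with $l$ vertices) equals the coefficient of $x^l$ in the polynomial $$\Big(\sum_{j=0}^{m-1}\binom{m}{j}x^j\Big)^{k}\,(1+x)^{b}.$$ In particular $f_{k(m^2-1)-1}=m^k$.
   Context: Let $F$ be an algebraically closed field, $S=F[x^{(l)}_{i,j}:1\le i,j\le m,\ 0\le l\le k-1]$, and $X(t)$ the $m\times m$ matrix over $S[t]/(t^k)$ with entries $x_{i,j}(t)=\sum_{l=0}^{k-1}x^{(l)}_{i,j}t^l$. $\mathcal I^{m,m}_{m,k}$ is the ideal of $S$ generated by the coefficients of all powers of $t$ of $\det X(t)$. Variables are ordered by $x^{(l)}_{i,j}>x^{(l')}_{i',j'}$ iff $l>l'$, or $l=l'$ and $(i,j)$ precedes $(i',j')$ lexicographically; monomials are ordered by the graded reverse lexicographic order for this variable order. $\mathrm{LM}(\mathcal I^{m,m}_{m,k})$ is the ideal generated by the leading monomials of all elements of $\mathcal I^{m,m}_{m,k}$; it is generated by squarefree monomials. The Stanley–Reisner complex of a squarefree monomial ideal $I$ contained in the square of the maximal homogeneous ideal is the simplicial complex on the set of variables whose faces are the subsets of variables whose product is not in $I$. *)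

theory Defs
  imports "HOL-Library.Poly_Mapping" "HOL-Computational_Algebra.Polynomial"
    "Jordan_Normal_Form.Determinant"
begin

text \<open>Variables x^{(l)}_{i,j} are encoded as triples (l, i, j) with 0-based
  indices i, j < m and l < k.\<close>

type_synonym var = "nat \<times> nat \<times> nat"
type_synonym monomial = "var \<Rightarrow>\<^sub>0 nat"
type_synonym 'a mpoly = "monomial \<Rightarrow>\<^sub>0 'a"

definition vars :: "nat \<Rightarrow> nat \<Rightarrow> var set" where
  "vars m k = {(l, i, j). l < k \<and> i < m \<and> j < m}"

definition S_ring :: "nat \<Rightarrow> nat \<Rightarrow> 'a::comm_ring_1 mpoly set" where
  "S_ring m k = {p. \<forall>\<alpha>\<in>Poly_Mapping.keys p. Poly_Mapping.keys \<alpha> \<subseteq> vars m k}"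

definition Var :: "var \<Rightarrow> 'a::comm_ring_1 mpoly" where
  "Var v = Poly_Mapping.single (Poly_Mapping.single v 1) 1"

definition xt :: "nat \<Rightarrow> nat \<Rightarrow> nat \<Rightarrow> 'a::comm_ring_1 mpoly poly" where
  "xt k i j = (\<Sum>l<k. Polynomial.monom (Var (l, i, j)) l)"

definition Xt :: "nat \<Rightarrow> nat \<Rightarrow> 'a::comm_ring_1 mpoly poly mat" where
  "Xt m k = mat m m (\<lambda>(i, j). xt k i j)"

text \<open>Generators: coefficients of t^0, ..., t^{k-1} of det X(t)
  (i.e. the coefficients of det X(t) computed in S[t]/(t^k)).\<close>
definition det_gens :: "nat \<Rightarrow> nat \<Rightarrow> 'a::comm_ring_1 mpoly set" where
  "det_gens m k = {coeff (det (Xt m k)) l | l. l < k}"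

definition ideal_gen :: "'a::comm_ring_1 mpoly set \<Rightarrow> 'a mpoly set \<Rightarrow> 'a mpoly set" where
  "ideal_gen R G = {p. \<exists>H c. finite H \<and> H \<subseteq> G \<and> (\<forall>g\<in>H. c g \<in> R) \<and>
                          p = (\<Sum>g\<in>H. c g * g)}"

definition I_det :: "nat \<Rightarrow> nat \<Rightarrow> 'a::comm_ring_1 mpoly set" where
  "I_det m k = ideal_gen (S_ring m k) (det_gens m k)"

text \<open>Variable order: x^{(l)}_{i,j} > x^{(l')}_{i',j'} iff l > l', or l = l' and
  (i,j) precedes (i',j') lexicographically.  var_less v w means v < w.\<close>
definition var_less :: "var \<Rightarrow> var \<Rightarrow> bool" where
  "var_less v w = (case v of (l, i, j) \<Rightarrow> case w of (l', i', j') \<Rightarrow>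
      l < l' \<or> (l = l' \<and> (i' < i \<or> (i' = i \<and> j' < j))))"

definition mdeg :: "monomial \<Rightarrow> nat" where
  "mdeg \<alpha> = (\<Sum>v\<in>Poly_Mapping.keys \<alpha>. Poly_Mapping.lookup \<alpha> v)"

definition grevlex_less :: "monomial \<Rightarrow> monomial \<Rightarrow> bool" where
  "grevlex_less \<beta> \<alpha> = (mdeg \<beta> < mdeg \<alpha> \<or>
     (mdeg \<beta> = mdeg \<alpha> \<and> \<beta> \<noteq> \<alpha> \<and>
       (let v = (THE v. Poly_Mapping.lookup \<alpha> v \<noteq> Poly_Mapping.lookup \<beta> v \<and>
                   (\<forall>w. Poly_Mapping.lookup \<alpha> w \<noteq> Poly_Mapping.lookup \<beta> w \<longrightarrow> w = v \<or> var_less v w))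
        in Poly_Mapping.lookup \<alpha> v < Poly_Mapping.lookup \<beta> v)))"

definition lead_mon :: "'a::zero mpoly \<Rightarrow> monomial" where
  "lead_mon p = (THE \<alpha>. \<alpha> \<in> Poly_Mapping.keys p \<and> (\<forall>\<beta>\<in>Poly_Mapping.keys p. \<beta> \<noteq> \<alpha> \<longrightarrow> grevlex_less \<beta> \<alpha>))"

definition mon_poly :: "monomial \<Rightarrow> 'a::comm_ring_1 mpoly" where
  "mon_poly \<alpha> = Poly_Mapping.single \<alpha> 1"

definition LM_ideal :: "'a::comm_ring_1 mpoly set \<Rightarrow> 'a mpoly set \<Rightarrow> 'a mpoly set" where
  "LM_ideal R I = ideal_gen R {mon_poly (lead_mon p) | p. p \<in> I \<and> p \<noteq> 0}"

definition sqfree_mon :: "var set \<Rightarrow> monomial" where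
  "sqfree_mon A = (\<Sum>v\<in>A. Poly_Mapping.single v 1)"

definition SR_complex :: "var set \<Rightarrow> 'a::comm_ring_1 mpoly set \<Rightarrow> var set set" where
  "SR_complex V J = {A. A \<subseteq> V \<and> mon_poly (sqfree_mon A) \<notin> J}"

definition sc_dim :: "'v set set \<Rightarrow> int" where
  "sc_dim \<Delta> = int (Max (card ` \<Delta>)) - 1"

definition f_vec :: "'v set set \<Rightarrow> nat \<Rightarrow> nat" where
  "f_vec \<Delta> l = card {A \<in> \<Delta>. card A = l}"

end

theory Submission
  imports Defs
begin

text \<open>The coefficient \<open>g\<^sub>l\<close> of \<open>t^l\<close> in \<open>det X(t)\<close> is a signed sum of squarefree monomials
  \<open>\<Prod>\<^sub>i x^(f i)_(i, p i)\<close>, one for each permutation \<open>p\<close> and each choice of levels \<open>f\<close> with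
  \<open>\<Sum>\<^sub>i f i = l\<close>. Its grevlex-leading monomial is an explicit product of \<open>m\<close> variables, and
  distinct \<open>l\<close> use disjoint sets of variables. Generators with pairwise coprime leading
  monomials form a Groebner basis, so \<open>LM(I)\<close> is generated by these \<open>k\<close> monomials and the faces
  of \<open>\<Delta>\<close> are the sets of variables containing none of the \<open>k\<close> disjoint \<open>m\<close>-sets. Counting
  them by size gives the generating function \<open>((1 + x)^m - x^m)^k (1 + x)^b\<close>, whose degree
  \<open>k (m\<^sup>2 - 1)\<close> and leading coefficient \<open>m^k\<close> give the dimension and the number of facets.\<close>

lemma var_less_iff [simp]:
  "var_less (l, i, j) (l', i', j') \<longleftrightarrow> l < l' \<or> (l = l' \<and> (i' < i \<or> (i' = i \<and> j' < j)))"
  by (simp add: var_less_def)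

lemma var_less_irrefl: "\<not> var_less v v"
  by (cases v) auto

lemma var_less_trans: "var_less u v \<Longrightarrow> var_less v w \<Longrightarrow> var_less u w"
  by (cases u; cases v; cases w) auto

lemma var_less_asym: "var_less v w \<Longrightarrow> \<not> var_less w v"
  using var_less_trans var_less_irrefl by blast

lemma var_less_total: "v \<noteq> w \<Longrightarrow> var_less v w \<or> var_less w v"
  by (cases v; cases w) auto

lemma finite_ex_least:
  assumes "finite A" "A \<noteq> {}"
    and trans: "\<And>x y z. R x y \<Longrightarrow> R y z \<Longrightarrow> R x z"
    and total: "\<And>x y. x \<noteq> y \<Longrightarrow> R x y \<or> R y x"
  shows "\<exists>x\<in>A. \<forall>y\<in>A. y \<noteq> x \<longrightarrow> R x y"
  using assms(1,2)
proof (induction A rule: finite_ne_induct)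
  case (singleton x)
  then show ?case by simp
next
  case (insert a F)
  then obtain x where x: "x \<in> F" "\<And>y. y \<in> F \<Longrightarrow> y \<noteq> x \<Longrightarrow> R x y" by blast
  show ?case
  proof (cases "R a x")
    case True
    have "R a y" if "y \<in> F" for y
    proof (cases "y = x")
      case False
      then show ?thesis using trans[OF True x(2)[OF that]] by simp
    qed (use True in simp)
    then show ?thesis by (intro bexI[of _ a]) auto
  next
    case False
    have "x \<noteq> a" using x(1) insert.hyps by blast
    then have "R x a" using total False by blast
    then show ?thesis using x by (intro bexI[of _ x]) auto
  qed
qed

definition first_diff :: "monomial \<Rightarrow> monomial \<Rightarrow> var \<Rightarrow> bool" where
  "first_diff \<alpha> \<beta> v \<longleftrightarrow> Poly_Mapping.lookup \<alpha> v \<noteq> Poly_Mapping.lookup \<beta> v \<and>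
     (\<forall>w. var_less w v \<longrightarrow> Poly_Mapping.lookup \<alpha> w = Poly_Mapping.lookup \<beta> w)"

lemma first_diff_sym: "first_diff \<alpha> \<beta> v \<longleftrightarrow> first_diff \<beta> \<alpha> v"
  by (auto simp: first_diff_def)

lemma first_diff_unique: "first_diff \<alpha> \<beta> v \<Longrightarrow> first_diff \<alpha> \<beta> w \<Longrightarrow> v = w"
proof (rule ccontr)
  assume "first_diff \<alpha> \<beta> v" "first_diff \<alpha> \<beta> w" "v \<noteq> w"
  then consider "var_less v w" | "var_less w v" using var_less_total by blast
  then show False
    using \<open>first_diff \<alpha> \<beta> v\<close> \<open>first_diff \<alpha> \<beta> w\<close> unfolding first_diff_def by cases blast+
qed

lemma ex_first_diff:
  assumes "\<alpha> \<noteq> \<beta>"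
  shows "\<exists>v. first_diff \<alpha> \<beta> v"
proof -
  let ?D = "{w. Poly_Mapping.lookup \<alpha> w \<noteq> Poly_Mapping.lookup \<beta> w}"
  have "?D \<subseteq> Poly_Mapping.keys \<alpha> \<union> Poly_Mapping.keys \<beta>"
    by (auto simp: in_keys_iff)
  then have "finite ?D" by (rule finite_subset) simp
  moreover have "?D \<noteq> {}"
  proof
    assume "?D = {}"
    then have "\<alpha> = \<beta>" by (intro poly_mapping_eqI) blast
    with assms show False ..
  qed
  ultimately obtain v where v: "v \<in> ?D" and least: "\<And>w. w \<in> ?D \<Longrightarrow> w \<noteq> v \<Longrightarrow> var_less v w"
    using finite_ex_least[of ?D var_less] var_less_trans var_less_total by blast
  have "Poly_Mapping.lookup \<alpha> w = Poly_Mapping.lookup \<beta> w" if "var_less w v" for w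
  proof (rule ccontr)
    assume "Poly_Mapping.lookup \<alpha> w \<noteq> Poly_Mapping.lookup \<beta> w"
    then have "var_less v w" using least that var_less_irrefl by blast
    with that show False using var_less_asym by blast
  qed
  then have "first_diff \<alpha> \<beta> v"
    using v unfolding first_diff_def by blast
  then show ?thesis ..
qed

lemma first_diff_iff:
  "first_diff \<alpha> \<beta> v \<longleftrightarrow> Poly_Mapping.lookup \<alpha> v \<noteq> Poly_Mapping.lookup \<beta> v \<and>
     (\<forall>w. Poly_Mapping.lookup \<alpha> w \<noteq> Poly_Mapping.lookup \<beta> w \<longrightarrow> w = v \<or> var_less v w)"
  unfolding first_diff_def by (metis var_less_total var_less_asym)

lemma grevlex_less_iff:
  "grevlex_less \<beta> \<alpha> \<longleftrightarrow> mdeg \<beta> < mdeg \<alpha> \<or>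
     (mdeg \<beta> = mdeg \<alpha> \<and> (\<exists>v. first_diff \<alpha> \<beta> v \<and> Poly_Mapping.lookup \<alpha> v < Poly_Mapping.lookup \<beta> v))"
proof (cases "mdeg \<beta> = mdeg \<alpha> \<and> \<beta> \<noteq> \<alpha>")
  case False
  then show ?thesis
    by (auto simp: grevlex_less_def first_diff_def)
next
  case True
  then obtain v where v: "first_diff \<alpha> \<beta> v" using ex_first_diff by metis
  have "grevlex_less \<beta> \<alpha> \<longleftrightarrow>
      Poly_Mapping.lookup \<alpha> (THE v. first_diff \<alpha> \<beta> v) < Poly_Mapping.lookup \<beta> (THE v. first_diff \<alpha> \<beta> v)"
    using True unfolding grevlex_less_def Let_def first_diff_iff by (simp only: less_irrefl simp_thms)
  also have "(THE v. first_diff \<alpha> \<beta> v) = v"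
    by (rule the_equality, rule v, rule first_diff_unique[OF _ v])
  finally have "grevlex_less \<beta> \<alpha> \<longleftrightarrow> Poly_Mapping.lookup \<alpha> v < Poly_Mapping.lookup \<beta> v" .
  moreover have "(\<exists>w. first_diff \<alpha> \<beta> w \<and> Poly_Mapping.lookup \<alpha> w < Poly_Mapping.lookup \<beta> w)
      \<longleftrightarrow> Poly_Mapping.lookup \<alpha> v < Poly_Mapping.lookup \<beta> v"
    using v first_diff_unique by blast
  ultimately show ?thesis
    using True by (simp del: split_paired_Ex)
qed

lemma mdeg_superset:
  assumes "finite K" "Poly_Mapping.keys \<alpha> \<subseteq> K"
  shows "mdeg \<alpha> = (\<Sum>v\<in>K. Poly_Mapping.lookup \<alpha> v)"
  unfolding mdeg_def by (rule sum.mono_neutral_left) (use assms in \<open>auto simp: in_keys_iff\<close>)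

lemma mdeg_add: "mdeg (\<alpha> + \<beta>) = mdeg \<alpha> + mdeg \<beta>"
proof -
  let ?K = "Poly_Mapping.keys \<alpha> \<union> Poly_Mapping.keys \<beta>"
  have "Poly_Mapping.keys (\<alpha> + \<beta>) \<subseteq> ?K" by (rule keys_add)
  then show ?thesis
    by (simp add: mdeg_superset[of ?K] lookup_add sum.distrib)
qed

lemma grevlex_less_irrefl: "\<not> grevlex_less \<alpha> \<alpha>"
  by (auto simp: grevlex_less_iff)

lemma grevlex_less_trans:
  assumes "grevlex_less \<gamma> \<beta>" "grevlex_less \<beta> \<alpha>"
  shows "grevlex_less \<gamma> \<alpha>"
proof (cases "mdeg \<gamma> = mdeg \<beta> \<and> mdeg \<beta> = mdeg \<alpha>")
  case False
  then show ?thesis using assms by (auto simp: grevlex_less_iff)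
next
  case True
  obtain v where v: "first_diff \<beta> \<gamma> v" "Poly_Mapping.lookup \<beta> v < Poly_Mapping.lookup \<gamma> v"
    using assms(1) True by (auto simp: grevlex_less_iff)
  obtain w where w: "first_diff \<alpha> \<beta> w" "Poly_Mapping.lookup \<alpha> w < Poly_Mapping.lookup \<beta> w"
    using assms(2) True by (auto simp: grevlex_less_iff)
  have below_v: "\<And>u. var_less u v \<Longrightarrow> Poly_Mapping.lookup \<beta> u = Poly_Mapping.lookup \<gamma> u"
    and below_w: "\<And>u. var_less u w \<Longrightarrow> Poly_Mapping.lookup \<alpha> u = Poly_Mapping.lookup \<beta> u"
    using v(1) w(1) unfolding first_diff_def by blast+
  consider "v = w" | "var_less v w" | "var_less w v" using var_less_total by blast
  then have "\<exists>u. first_diff \<alpha> \<gamma> u \<and> Poly_Mapping.lookup \<alpha> u < Poly_Mapping.lookup \<gamma> u"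
  proof cases
    case 1
    then have "first_diff \<alpha> \<gamma> v"
      using v(2) w(2) below_v below_w unfolding first_diff_def by simp
    then show ?thesis using 1 v(2) w(2) by fastforce
  next
    case 2
    then have "first_diff \<alpha> \<gamma> v"
      using v(2) below_v below_w var_less_trans unfolding first_diff_def by (metis order.irrefl)
    then show ?thesis using 2 v(2) below_w by fastforce
  next
    case 3
    then have "first_diff \<alpha> \<gamma> w"
      using w(2) below_v below_w var_less_trans unfolding first_diff_def by (metis order.irrefl)
    then show ?thesis using 3 w(2) below_v by fastforce
  qed
  then show ?thesis using True by (auto simp: grevlex_less_iff)
qed

lemma grevlex_less_asym: "grevlex_less \<beta> \<alpha> \<Longrightarrow> \<not> grevlex_less \<alpha> \<beta>"
  using grevlex_less_trans grevlex_less_irrefl by blast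

lemma grevlex_less_total:
  assumes "\<alpha> \<noteq> \<beta>"
  shows "grevlex_less \<alpha> \<beta> \<or> grevlex_less \<beta> \<alpha>"
proof (cases "mdeg \<alpha> = mdeg \<beta>")
  case True
  obtain v where v: "first_diff \<alpha> \<beta> v" "first_diff \<beta> \<alpha> v"
    using ex_first_diff[OF assms] first_diff_sym by blast
  then consider "Poly_Mapping.lookup \<alpha> v < Poly_Mapping.lookup \<beta> v"
    | "Poly_Mapping.lookup \<beta> v < Poly_Mapping.lookup \<alpha> v"
    unfolding first_diff_def by linarith
  then show ?thesis
  proof cases
    case 1
    then have "grevlex_less \<beta> \<alpha>" unfolding grevlex_less_iff using True[symmetric] v(1) by blast
    then show ?thesis ..
  next
    case 2
    then have "grevlex_less \<alpha> \<beta>" unfolding grevlex_less_iff using True v(2) by blast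
    then show ?thesis ..
  qed
qed (auto simp: grevlex_less_iff)

lemma first_diff_add: "first_diff (\<gamma> + \<alpha>) (\<gamma> + \<beta>) v \<longleftrightarrow> first_diff \<alpha> \<beta> v"
  by (simp add: first_diff_def lookup_add)

lemma grevlex_less_add:
  "grevlex_less \<beta> \<alpha> \<Longrightarrow> grevlex_less (\<gamma> + \<beta>) (\<gamma> + \<alpha>)"
  unfolding grevlex_less_iff first_diff_add by (simp add: mdeg_add lookup_add del: split_paired_Ex)

definition mon_dvd :: "monomial \<Rightarrow> monomial \<Rightarrow> bool" where
  "mon_dvd \<alpha> \<beta> \<longleftrightarrow> (\<forall>v. Poly_Mapping.lookup \<alpha> v \<le> Poly_Mapping.lookup \<beta> v)"

definition mon_coprime :: "monomial \<Rightarrow> monomial \<Rightarrow> bool" where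
  "mon_coprime \<alpha> \<beta> \<longleftrightarrow> (\<forall>v. Poly_Mapping.lookup \<alpha> v = 0 \<or> Poly_Mapping.lookup \<beta> v = 0)"

lemma mon_dvd_add: "mon_dvd \<alpha> (\<gamma> + \<alpha>)"
  by (simp add: mon_dvd_def lookup_add)

lemma mon_dvd_trans:
  assumes "mon_dvd \<alpha> \<beta>" "mon_dvd \<beta> \<gamma>"
  shows "mon_dvd \<alpha> \<gamma>"
  unfolding mon_dvd_def
proof
  fix v
  show "Poly_Mapping.lookup \<alpha> v \<le> Poly_Mapping.lookup \<gamma> v"
    using assms unfolding mon_dvd_def by (metis le_trans)
qed

lemma mon_dvd_diff_add:
  assumes "mon_dvd \<alpha> \<beta>"
  shows "(\<beta> - \<alpha>) + \<alpha> = \<beta>"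
proof (rule poly_mapping_eqI)
  fix v
  have "Poly_Mapping.lookup \<alpha> v \<le> Poly_Mapping.lookup \<beta> v"
    using assms unfolding mon_dvd_def by blast
  then show "Poly_Mapping.lookup (\<beta> - \<alpha> + \<alpha>) v = Poly_Mapping.lookup \<beta> v"
    by (simp add: lookup_add lookup_minus)
qed

lemma mon_dvd_keys:
  assumes "mon_dvd \<alpha> \<beta>"
  shows "Poly_Mapping.keys \<alpha> \<subseteq> Poly_Mapping.keys \<beta>"
proof
  fix v assume "v \<in> Poly_Mapping.keys \<alpha>"
  moreover have "Poly_Mapping.lookup \<alpha> v \<le> Poly_Mapping.lookup \<beta> v"
    using assms unfolding mon_dvd_def by blast
  ultimately show "v \<in> Poly_Mapping.keys \<beta>" by (simp add: in_keys_iff)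
qed

lemma mon_dvd_coprime:
  assumes "mon_dvd \<alpha> (\<beta> + \<gamma>)" "mon_coprime \<alpha> \<gamma>"
  shows "mon_dvd \<alpha> \<beta>"
  unfolding mon_dvd_def
proof
  fix v
  have "Poly_Mapping.lookup \<alpha> v \<le> Poly_Mapping.lookup (\<beta> + \<gamma>) v"
    using assms(1) unfolding mon_dvd_def by blast
  then have "Poly_Mapping.lookup \<alpha> v \<le> Poly_Mapping.lookup \<beta> v + Poly_Mapping.lookup \<gamma> v"
    by (simp only: lookup_add)
  moreover have "Poly_Mapping.lookup \<alpha> v = 0 \<or> Poly_Mapping.lookup \<gamma> v = 0"
    using assms(2) unfolding mon_coprime_def by (rule spec)
  ultimately show "Poly_Mapping.lookup \<alpha> v \<le> Poly_Mapping.lookup \<beta> v" by linarith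
qed

definition mpolys_in :: "var set \<Rightarrow> 'a::comm_ring_1 mpoly set" where
  "mpolys_in V = {p. \<forall>\<alpha>\<in>Poly_Mapping.keys p. Poly_Mapping.keys \<alpha> \<subseteq> V}"

lemma S_ring_eq_mpolys_in: "S_ring m k = mpolys_in (vars m k)"
  by (simp add: S_ring_def mpolys_in_def)

lemma mpolys_in_0 [simp]: "0 \<in> mpolys_in V"
  and mpolys_in_1 [simp]: "1 \<in> mpolys_in V"
  by (simp_all add: mpolys_in_def)

lemma mpolys_in_single: "Poly_Mapping.keys \<alpha> \<subseteq> V \<Longrightarrow> Poly_Mapping.single \<alpha> c \<in> mpolys_in V"
  by (simp add: mpolys_in_def)

lemma mpolys_in_keys_subset_Un:
  assumes "p \<in> mpolys_in V" "q \<in> mpolys_in V"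
    and "Poly_Mapping.keys r \<subseteq> Poly_Mapping.keys p \<union> Poly_Mapping.keys q"
  shows "r \<in> mpolys_in V"
  using assms unfolding mpolys_in_def mem_Collect_eq by (meson UnE subsetD)

lemma mpolys_in_add: "p \<in> mpolys_in V \<Longrightarrow> q \<in> mpolys_in V \<Longrightarrow> p + q \<in> mpolys_in V"
  by (rule mpolys_in_keys_subset_Un[OF _ _ keys_add])

lemma mpolys_in_diff: "p \<in> mpolys_in V \<Longrightarrow> q \<in> mpolys_in V \<Longrightarrow> p - q \<in> mpolys_in V"
  by (rule mpolys_in_keys_subset_Un[OF _ _ keys_diff])

lemma mpolys_in_mult:
  assumes "p \<in> mpolys_in V" "q \<in> mpolys_in V"
  shows "p * q \<in> mpolys_in V"
  unfolding mpolys_in_def mem_Collect_eq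
proof
  fix \<gamma> assume "\<gamma> \<in> Poly_Mapping.keys (p * q)"
  then obtain \<alpha> \<beta> where "\<alpha> \<in> Poly_Mapping.keys p" "\<beta> \<in> Poly_Mapping.keys q" "\<gamma> = \<alpha> + \<beta>"
    using keys_mult by blast
  then show "Poly_Mapping.keys \<gamma> \<subseteq> V"
    using assms keys_add[of \<alpha> \<beta>] unfolding mpolys_in_def by blast
qed

lemma mpolys_in_sum: "(\<And>i. i \<in> I \<Longrightarrow> f i \<in> mpolys_in V) \<Longrightarrow> sum f I \<in> mpolys_in V"
  by (induction I rule: infinite_finite_induct) (auto intro: mpolys_in_add)

definition has_lead_term :: "'a::zero mpoly \<Rightarrow> monomial \<Rightarrow> 'a \<Rightarrow> bool" where
  "has_lead_term p \<alpha> c \<longleftrightarrow> Poly_Mapping.lookup p \<alpha> = c \<and> c \<noteq> 0 \<and>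
     (\<forall>\<beta>\<in>Poly_Mapping.keys p. \<beta> \<noteq> \<alpha> \<longrightarrow> grevlex_less \<beta> \<alpha>)"

lemma has_lead_term_nonzero: "has_lead_term p \<alpha> c \<Longrightarrow> p \<noteq> 0"
  by (auto simp: has_lead_term_def)

lemma lead_mon_eqI:
  assumes "has_lead_term p \<alpha> c"
  shows "lead_mon p = \<alpha>"
  unfolding lead_mon_def
proof (rule the_equality)
  show "\<alpha> \<in> Poly_Mapping.keys p \<and> (\<forall>\<beta>\<in>Poly_Mapping.keys p. \<beta> \<noteq> \<alpha> \<longrightarrow> grevlex_less \<beta> \<alpha>)"
    using assms by (simp add: has_lead_term_def in_keys_iff)
next
  fix \<gamma> assume \<gamma>: "\<gamma> \<in> Poly_Mapping.keys p \<and> (\<forall>\<beta>\<in>Poly_Mapping.keys p. \<beta> \<noteq> \<gamma> \<longrightarrow> grevlex_less \<beta> \<gamma>)"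
  show "\<gamma> = \<alpha>"
  proof (rule ccontr)
    assume "\<gamma> \<noteq> \<alpha>"
    moreover have "\<alpha> \<in> Poly_Mapping.keys p" using assms by (simp add: has_lead_term_def in_keys_iff)
    ultimately have "grevlex_less \<gamma> \<alpha>" "grevlex_less \<alpha> \<gamma>"
      using assms \<gamma> unfolding has_lead_term_def by auto
    then show False using grevlex_less_asym by blast
  qed
qed

lemma has_lead_term_lead_mon:
  assumes "p \<noteq> 0"
  shows "has_lead_term p (lead_mon p) (Poly_Mapping.lookup p (lead_mon p))"
proof -
  have "Poly_Mapping.keys p \<noteq> {}" using assms by simp
  then have "\<exists>\<alpha>\<in>Poly_Mapping.keys p. \<forall>\<beta>\<in>Poly_Mapping.keys p. \<beta> \<noteq> \<alpha> \<longrightarrow> grevlex_less \<beta> \<alpha>"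
    by (rule finite_ex_least[OF finite_keys]) (use grevlex_less_trans grevlex_less_total in metis)+
  then obtain \<alpha> where \<alpha>: "\<alpha> \<in> Poly_Mapping.keys p" "\<forall>\<beta>\<in>Poly_Mapping.keys p. \<beta> \<noteq> \<alpha> \<longrightarrow> grevlex_less \<beta> \<alpha>"
    by blast
  then have "has_lead_term p \<alpha> (Poly_Mapping.lookup p \<alpha>)"
    by (simp add: has_lead_term_def in_keys_iff)
  with lead_mon_eqI show ?thesis by metis
qed

lemma lead_mon_in_keys: "p \<noteq> 0 \<Longrightarrow> lead_mon p \<in> Poly_Mapping.keys p"
  using has_lead_term_lead_mon[of p] by (simp add: has_lead_term_def in_keys_iff)

lemma has_lead_term_single: "c \<noteq> 0 \<Longrightarrow> has_lead_term (Poly_Mapping.single \<alpha> c) \<alpha> c"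
  by (simp add: has_lead_term_def)

lemma has_lead_term_keys_below:
  assumes "has_lead_term p \<beta> c" "grevlex_less \<beta> \<delta>"
  shows "\<forall>\<gamma>\<in>Poly_Mapping.keys p. grevlex_less \<gamma> \<delta>"
proof
  fix \<gamma> assume "\<gamma> \<in> Poly_Mapping.keys p"
  then have "\<gamma> = \<beta> \<or> grevlex_less \<gamma> \<beta>"
    using assms(1) unfolding has_lead_term_def by blast
  then show "grevlex_less \<gamma> \<delta>"
    using assms(2) grevlex_less_trans by blast
qed

lemma has_lead_term_keys_tail:
  fixes p :: "'a::comm_ring_1 mpoly"
  assumes "has_lead_term p \<alpha> a"
  shows "\<forall>\<beta>\<in>Poly_Mapping.keys (p - Poly_Mapping.single \<alpha> a). grevlex_less \<beta> \<alpha>"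
proof
  fix \<beta> assume "\<beta> \<in> Poly_Mapping.keys (p - Poly_Mapping.single \<alpha> a)"
  then have ne: "Poly_Mapping.lookup p \<beta> \<noteq> Poly_Mapping.lookup (Poly_Mapping.single \<alpha> a) \<beta>"
    by (simp add: in_keys_iff lookup_minus)
  then have "\<beta> \<noteq> \<alpha>"
    using assms by (auto simp: has_lead_term_def)
  moreover from this ne have "\<beta> \<in> Poly_Mapping.keys p"
    by (simp add: in_keys_iff lookup_single)
  ultimately show "grevlex_less \<beta> \<alpha>"
    using assms unfolding has_lead_term_def by blast
qed

lemma has_lead_term_add_lower:
  assumes "has_lead_term p \<alpha> a" "\<forall>\<beta>\<in>Poly_Mapping.keys q. grevlex_less \<beta> \<alpha>"
  shows "has_lead_term (p + q) \<alpha> a"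
proof -
  have "\<alpha> \<notin> Poly_Mapping.keys q" using assms(2) grevlex_less_irrefl by blast
  then have "Poly_Mapping.lookup (p + q) \<alpha> = a"
    using assms(1) by (simp add: in_keys_iff lookup_add has_lead_term_def)
  moreover have "grevlex_less \<beta> \<alpha>" if "\<beta> \<in> Poly_Mapping.keys (p + q)" "\<beta> \<noteq> \<alpha>" for \<beta>
    using that assms keys_add[of p q] unfolding has_lead_term_def by blast
  ultimately show ?thesis
    using assms(1) unfolding has_lead_term_def by blast
qed

lemma has_lead_term_mult:
  fixes p q :: "'a::comm_ring_1 mpoly"
  assumes p: "has_lead_term p \<alpha> a" and q: "has_lead_term q \<beta> b" and ab: "a * b \<noteq> 0"
  shows "has_lead_term (p * q) (\<alpha> + \<beta>) (a * b)"
proof -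
  define P where "P = p - Poly_Mapping.single \<alpha> a"
  define Q where "Q = q - Poly_Mapping.single \<beta> b"
  have P_below: "\<forall>\<gamma>\<in>Poly_Mapping.keys P. grevlex_less \<gamma> \<alpha>"
    and Q_below: "\<forall>\<gamma>\<in>Poly_Mapping.keys Q. grevlex_less \<gamma> \<beta>"
    using has_lead_term_keys_tail[OF p] has_lead_term_keys_tail[OF q] unfolding P_def Q_def by blast+
  have eq: "p * q = Poly_Mapping.single (\<alpha> + \<beta>) (a * b) + (Poly_Mapping.single \<alpha> a * Q + P * q)"
    unfolding P_def Q_def by (simp add: algebra_simps mult_single)
  have low_1: "\<forall>\<gamma>\<in>Poly_Mapping.keys (Poly_Mapping.single \<alpha> a * Q). grevlex_less \<gamma> (\<alpha> + \<beta>)"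
  proof
    fix \<gamma> assume "\<gamma> \<in> Poly_Mapping.keys (Poly_Mapping.single \<alpha> a * Q)"
    then obtain \<gamma>\<^sub>1 \<gamma>\<^sub>2 where "\<gamma>\<^sub>1 \<in> Poly_Mapping.keys (Poly_Mapping.single \<alpha> a)"
      "\<gamma>\<^sub>2 \<in> Poly_Mapping.keys Q" "\<gamma> = \<gamma>\<^sub>1 + \<gamma>\<^sub>2"
      using keys_mult by blast
    then show "grevlex_less \<gamma> (\<alpha> + \<beta>)"
      using Q_below grevlex_less_add by (simp split: if_splits)
  qed
  have low_2: "\<forall>\<gamma>\<in>Poly_Mapping.keys (P * q). grevlex_less \<gamma> (\<alpha> + \<beta>)"
  proof
    fix \<gamma> assume "\<gamma> \<in> Poly_Mapping.keys (P * q)"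
    then obtain \<gamma>\<^sub>1 \<gamma>\<^sub>2 where \<gamma>: "\<gamma>\<^sub>1 \<in> Poly_Mapping.keys P" "\<gamma>\<^sub>2 \<in> Poly_Mapping.keys q" "\<gamma> = \<gamma>\<^sub>1 + \<gamma>\<^sub>2"
      using keys_mult by blast
    have "grevlex_less (\<gamma>\<^sub>2 + \<gamma>\<^sub>1) (\<gamma>\<^sub>2 + \<alpha>)"
      using \<gamma>(1) P_below grevlex_less_add by blast
    moreover have "\<gamma>\<^sub>2 = \<beta> \<or> grevlex_less (\<alpha> + \<gamma>\<^sub>2) (\<alpha> + \<beta>)"
      using \<gamma>(2) q grevlex_less_add unfolding has_lead_term_def by blast
    ultimately show "grevlex_less \<gamma> (\<alpha> + \<beta>)"
      using \<gamma>(3) grevlex_less_trans by (metis add.commute)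
  qed
  have "\<forall>\<gamma>\<in>Poly_Mapping.keys (Poly_Mapping.single \<alpha> a * Q + P * q). grevlex_less \<gamma> (\<alpha> + \<beta>)"
    using low_1 low_2 keys_add[of "Poly_Mapping.single \<alpha> a * Q" "P * q"] by blast
  then show ?thesis
    unfolding eq by (rule has_lead_term_add_lower[OF has_lead_term_single[OF ab]])
qed

lemma lead_mon_mult:
  fixes p q :: "'a::idom mpoly"
  assumes "p \<noteq> 0" "q \<noteq> 0"
  shows "p * q \<noteq> 0" and "lead_mon (p * q) = lead_mon p + lead_mon q"
proof -
  have "Poly_Mapping.lookup p (lead_mon p) * Poly_Mapping.lookup q (lead_mon q) \<noteq> 0"
    using lead_mon_in_keys[OF assms(1)] lead_mon_in_keys[OF assms(2)] by (simp add: in_keys_iff)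
  then have "has_lead_term (p * q) (lead_mon p + lead_mon q)
      (Poly_Mapping.lookup p (lead_mon p) * Poly_Mapping.lookup q (lead_mon q))"
    by (intro has_lead_term_mult has_lead_term_lead_mon assms)
  then show "p * q \<noteq> 0" "lead_mon (p * q) = lead_mon p + lead_mon q"
    by (simp_all add: has_lead_term_nonzero lead_mon_eqI)
qed

lemma lead_mon_add_lower:
  assumes "p \<noteq> 0" "q = 0 \<or> grevlex_less (lead_mon q) (lead_mon p)"
  shows "lead_mon (p + q) = lead_mon p"
proof (cases "q = 0")
  case False
  then have "\<forall>\<beta>\<in>Poly_Mapping.keys q. grevlex_less \<beta> (lead_mon p)"
    using assms(2) has_lead_term_keys_below[OF has_lead_term_lead_mon[OF False]] by blast
  then show ?thesis
    by (rule lead_mon_eqI[OF has_lead_term_add_lower[OF has_lead_term_lead_mon[OF assms(1)]]])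
qed simp

lemma has_lead_term_sum_single:
  fixes c :: "'x \<Rightarrow> 'a::comm_monoid_add"
  assumes "finite X" "x\<^sub>0 \<in> X" "c x\<^sub>0 \<noteq> 0"
    and lower: "\<And>x. x \<in> X \<Longrightarrow> x \<noteq> x\<^sub>0 \<Longrightarrow> grevlex_less (\<mu> x) (\<mu> x\<^sub>0)"
  shows "has_lead_term (\<Sum>x\<in>X. Poly_Mapping.single (\<mu> x) (c x)) (\<mu> x\<^sub>0) (c x\<^sub>0)"
proof -
  let ?p = "\<Sum>x\<in>X. Poly_Mapping.single (\<mu> x) (c x)"
  have "\<mu> x \<noteq> \<mu> x\<^sub>0" if "x \<in> X" "x \<noteq> x\<^sub>0" for x
    using lower[OF that] grevlex_less_irrefl by metis
  then have "Poly_Mapping.lookup ?p (\<mu> x\<^sub>0) = (\<Sum>x\<in>X. if x = x\<^sub>0 then c x else 0)"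
    unfolding lookup_sum lookup_single by (intro sum.cong) (auto simp: when_def)
  also have "\<dots> = c x\<^sub>0"
    using assms(1,2) by simp
  finally have "Poly_Mapping.lookup ?p (\<mu> x\<^sub>0) = c x\<^sub>0" .
  moreover have "Poly_Mapping.keys ?p \<subseteq> \<mu> ` X"
    using keys_sum[of "\<lambda>x. Poly_Mapping.single (\<mu> x) (c x)" X] by auto
  ultimately show ?thesis
    using assms(3) lower unfolding has_lead_term_def by blast
qed

lemma finite_monomials_deg_le:
  assumes "finite V"
  shows "finite {\<beta>. Poly_Mapping.keys \<beta> \<subseteq> V \<and> mdeg \<beta> \<le> d}"
proof -
  let ?B = "{\<beta>. Poly_Mapping.keys \<beta> \<subseteq> V \<and> mdeg \<beta> \<le> d}"
  let ?f = "\<lambda>\<beta>. restrict (Poly_Mapping.lookup \<beta>) V"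
  have inj: "inj_on ?f ?B"
  proof (rule inj_onI)
    fix \<beta> \<beta>' assume "\<beta> \<in> ?B" "\<beta>' \<in> ?B" and eq: "?f \<beta> = ?f \<beta>'"
    have "Poly_Mapping.lookup \<beta> v = Poly_Mapping.lookup \<beta>' v" for v
    proof (cases "v \<in> V")
      case True
      then show ?thesis using fun_cong[OF eq, of v] by simp
    next
      case False
      then have "v \<notin> Poly_Mapping.keys \<beta>" "v \<notin> Poly_Mapping.keys \<beta>'"
        using \<open>\<beta> \<in> ?B\<close> \<open>\<beta>' \<in> ?B\<close> by blast+
      then show ?thesis by (simp add: in_keys_iff)
    qed
    then show "\<beta> = \<beta>'" by (rule poly_mapping_eqI)
  qed
  have sub: "?f ` ?B \<subseteq> V \<rightarrow>\<^sub>E {..d}"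
  proof
    fix g assume "g \<in> ?f ` ?B"
    then obtain \<beta> where \<beta>: "\<beta> \<in> ?B" "g = ?f \<beta>" by blast
    have "Poly_Mapping.lookup \<beta> v \<le> d" for v
    proof (cases "v \<in> Poly_Mapping.keys \<beta>")
      case True
      then have "Poly_Mapping.lookup \<beta> v \<le> mdeg \<beta>"
        unfolding mdeg_def by (intro member_le_sum) auto
      then show ?thesis using \<beta>(1) by simp
    qed (simp add: in_keys_iff)
    then show "g \<in> V \<rightarrow>\<^sub>E {..d}" using \<beta>(2) by auto
  qed
  have "finite (V \<rightarrow>\<^sub>E {..d})"
    using assms by (simp add: finite_PiE)
  then have "finite (?f ` ?B)" by (rule finite_subset[OF sub])
  then show ?thesis using inj by (rule finite_imageD)
qed

lemma wf_grevlex_less_on: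
  assumes "finite V"
  shows "wf {(\<beta>, \<alpha>). Poly_Mapping.keys \<beta> \<subseteq> V \<and> grevlex_less \<beta> \<alpha>}"
proof (rule wf_subset[OF wf_measure])
  define below where "below \<alpha> = {\<beta>. Poly_Mapping.keys \<beta> \<subseteq> V \<and> grevlex_less \<beta> \<alpha>}" for \<alpha>
  have "card (below \<beta>) < card (below \<alpha>)"
    if "Poly_Mapping.keys \<beta> \<subseteq> V" "grevlex_less \<beta> \<alpha>" for \<alpha> \<beta>
  proof (rule psubset_card_mono)
    have "below \<alpha> \<subseteq> {\<beta>. Poly_Mapping.keys \<beta> \<subseteq> V \<and> mdeg \<beta> \<le> mdeg \<alpha>}"
      by (auto simp: below_def grevlex_less_iff)
    then show "finite (below \<alpha>)"
      using finite_monomials_deg_le[OF assms] by (rule finite_subset)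
    show "below \<beta> \<subset> below \<alpha>"
      using that grevlex_less_trans grevlex_less_irrefl unfolding below_def by blast
  qed
  then show "{(\<beta>, \<alpha>). Poly_Mapping.keys \<beta> \<subseteq> V \<and> grevlex_less \<beta> \<alpha>} \<subseteq> measure (\<lambda>\<alpha>. card (below \<alpha>))"
    by auto
qed

lemma grevlex_less_induct:
  assumes "finite V"
    and "\<And>\<alpha>. (\<And>\<beta>. Poly_Mapping.keys \<beta> \<subseteq> V \<Longrightarrow> grevlex_less \<beta> \<alpha> \<Longrightarrow> P \<beta>) \<Longrightarrow> P \<alpha>"
  shows "P \<alpha>"
  using wf_grevlex_less_on[OF assms(1)] by (induction rule: wf_induct_rule) (use assms(2) in blast)

lemma lookup_sqfree_mon: "finite A \<Longrightarrow> Poly_Mapping.lookup (sqfree_mon A) v = (if v \<in> A then 1 else 0)"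
  unfolding sqfree_mon_def lookup_sum lookup_single by (simp add: when_def)

lemma keys_sqfree_mon:
  assumes "finite A"
  shows "Poly_Mapping.keys (sqfree_mon A) = A"
proof (rule Set.set_eqI)
  fix v
  show "v \<in> Poly_Mapping.keys (sqfree_mon A) \<longleftrightarrow> v \<in> A"
    using assms by (simp add: in_keys_iff lookup_sqfree_mon)
qed

lemma mdeg_sqfree_mon: "finite A \<Longrightarrow> mdeg (sqfree_mon A) = card A"
  unfolding mdeg_def by (simp add: keys_sqfree_mon lookup_sqfree_mon)

lemma mon_dvd_sqfree_mon_iff:
  "finite A \<Longrightarrow> finite B \<Longrightarrow> mon_dvd (sqfree_mon A) (sqfree_mon B) \<longleftrightarrow> A \<subseteq> B"
  unfolding mon_dvd_def by (auto simp: lookup_sqfree_mon split: if_splits)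

lemma mon_coprime_sqfree_mon: "finite A \<Longrightarrow> finite B \<Longrightarrow> A \<inter> B = {} \<Longrightarrow> mon_coprime (sqfree_mon A) (sqfree_mon B)"
  unfolding mon_coprime_def by (auto simp: lookup_sqfree_mon)

lemma grevlex_less_sqfree_mon:
  assumes "finite A" "finite B" "card A = card B" "A \<noteq> B"
    and smaller: "\<forall>v\<in>A - B. \<exists>w\<in>B - A. var_less w v"
  shows "grevlex_less (sqfree_mon B) (sqfree_mon A)"
proof -
  let ?D = "(A - B) \<union> (B - A)"
  have "finite ?D" "?D \<noteq> {}" using assms(1,2,4) by auto
  then obtain v where v: "v \<in> ?D" and least: "\<And>w. w \<in> ?D \<Longrightarrow> w \<noteq> v \<Longrightarrow> var_less v w"
    using finite_ex_least[of ?D var_less] var_less_trans var_less_total by blast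
  have "v \<notin> A - B"
  proof
    assume "v \<in> A - B"
    then obtain w where "w \<in> B - A" "var_less w v" using smaller by blast
    then show False using least[of w] var_less_asym var_less_irrefl by blast
  qed
  with v have "v \<in> B - A" by blast
  moreover have "w \<in> A \<longleftrightarrow> w \<in> B" if "var_less w v" for w
    using that least[of w] var_less_asym var_less_irrefl by blast
  ultimately have "first_diff (sqfree_mon A) (sqfree_mon B) v"
    "Poly_Mapping.lookup (sqfree_mon A) v < Poly_Mapping.lookup (sqfree_mon B) v"
    using assms(1,2) by (auto simp: first_diff_def lookup_sqfree_mon)
  moreover have "mdeg (sqfree_mon B) = mdeg (sqfree_mon A)"
    using assms(1-3) by (simp add: mdeg_sqfree_mon)
  ultimately show ?thesis
    unfolding grevlex_less_iff by blast
qed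

section \<open>Ideals with coprime leading monomials\<close>

lemma ideal_genI:
  "finite H \<Longrightarrow> H \<subseteq> G \<Longrightarrow> (\<And>g. g \<in> H \<Longrightarrow> c g \<in> R) \<Longrightarrow> (\<Sum>g\<in>H. c g * g) \<in> ideal_gen R G"
  unfolding ideal_gen_def by blast

lemma ideal_genE:
  assumes "p \<in> ideal_gen R G"
  obtains H c where "finite H" "H \<subseteq> G" "\<forall>g\<in>H. c g \<in> R" "p = (\<Sum>g\<in>H. c g * g)"
  using assms unfolding ideal_gen_def by blast

lemma zero_in_ideal_gen: "0 \<in> ideal_gen R G"
  unfolding ideal_gen_def by (intro CollectI exI[of _ "{}"]) simp

lemma ideal_gen_empty: "ideal_gen R {} = {0}"
  using zero_in_ideal_gen by (auto simp: ideal_gen_def)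

lemma mult_in_ideal_gen: "g \<in> G \<Longrightarrow> s \<in> R \<Longrightarrow> s * g \<in> ideal_gen R G"
  unfolding ideal_gen_def by (intro CollectI exI[of _ "{g}"] exI[of _ "\<lambda>_. s"]) simp

lemma ideal_gen_add:
  assumes "x \<in> ideal_gen (mpolys_in V) G" "y \<in> ideal_gen (mpolys_in V) G"
  shows "x + y \<in> ideal_gen (mpolys_in V) G"
proof -
  obtain H c where H: "finite H" "H \<subseteq> G" "\<forall>g\<in>H. c g \<in> mpolys_in V" "x = (\<Sum>g\<in>H. c g * g)"
    using assms(1) by (rule ideal_genE)
  obtain K d where K: "finite K" "K \<subseteq> G" "\<forall>g\<in>K. d g \<in> mpolys_in V" "y = (\<Sum>g\<in>K. d g * g)"
    using assms(2) by (rule ideal_genE)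
  define e where "e g = (if g \<in> H then c g else 0) + (if g \<in> K then d g else 0)" for g
  have "(\<Sum>g\<in>H \<union> K. (if g \<in> H then c g else 0) * g) = x"
    unfolding H(4) using H(1) K(1) by (intro sum.mono_neutral_cong_right) auto
  moreover have "(\<Sum>g\<in>H \<union> K. (if g \<in> K then d g else 0) * g) = y"
    unfolding K(4) using H(1) K(1) by (intro sum.mono_neutral_cong_right) auto
  ultimately have "x + y = (\<Sum>g\<in>H \<union> K. e g * g)"
    unfolding e_def distrib_right sum.distrib by simp
  moreover have "(\<Sum>g\<in>H \<union> K. e g * g) \<in> ideal_gen (mpolys_in V) G"
    using H K by (intro ideal_genI) (auto simp: e_def intro: mpolys_in_add)
  ultimately show ?thesis by simp
qed

lemma ideal_gen_mult:
  assumes "x \<in> ideal_gen (mpolys_in V) G" "s \<in> mpolys_in V"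
  shows "s * x \<in> ideal_gen (mpolys_in V) G"
proof -
  obtain H c where H: "finite H" "H \<subseteq> G" "\<forall>g\<in>H. c g \<in> mpolys_in V" "x = (\<Sum>g\<in>H. c g * g)"
    using assms(1) by (rule ideal_genE)
  then have "s * x = (\<Sum>g\<in>H. (s * c g) * g)"
    by (simp add: sum_distrib_left mult.assoc)
  moreover have "(\<Sum>g\<in>H. (s * c g) * g) \<in> ideal_gen (mpolys_in V) G"
    using H assms(2) by (intro ideal_genI) (auto intro: mpolys_in_mult)
  ultimately show ?thesis by simp
qed

lemma ideal_gen_insertE:
  assumes "h \<in> ideal_gen R (insert g G)" "0 \<in> R"
  obtains c b where "c \<in> R" "b \<in> ideal_gen R G" "h = c * g + b"
proof -
  obtain H d where H: "finite H" "H \<subseteq> insert g G" "\<forall>g\<in>H. d g \<in> R" "h = (\<Sum>g\<in>H. d g * g)"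
    using assms(1) by (rule ideal_genE)
  let ?c = "if g \<in> H then d g else 0"
  have "h = ?c * g + (\<Sum>g\<in>H - {g}. d g * g)"
    using H(1,4) by (cases "g \<in> H") (simp_all add: sum.remove)
  moreover have "(\<Sum>g\<in>H - {g}. d g * g) \<in> ideal_gen R G"
    using H by (intro ideal_genI) auto
  moreover have "?c \<in> R" using H(3) assms(2) by simp
  ultimately show ?thesis using that by blast
qed

lemma mon_dvd_of_monomial_in_ideal_gen:
  assumes "Poly_Mapping.single \<alpha> 1 \<in> ideal_gen R {Poly_Mapping.single \<beta> (1::'a::comm_ring_1) | \<beta>. P \<beta>}"
  shows "\<exists>\<beta>. P \<beta> \<and> mon_dvd \<beta> \<alpha>"
proof -
  obtain H c where H: "H \<subseteq> {Poly_Mapping.single \<beta> (1::'a) | \<beta>. P \<beta>}"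
    "Poly_Mapping.single \<alpha> 1 = (\<Sum>g\<in>H. c g * g)"
    using assms by (rule ideal_genE)
  have "(\<Sum>g\<in>H. Poly_Mapping.lookup (c g * g) \<alpha>) \<noteq> 0"
    using arg_cong[OF H(2), of "\<lambda>p. Poly_Mapping.lookup p \<alpha>"] by (simp add: lookup_sum)
  then obtain h where "h \<in> H" "Poly_Mapping.lookup (c h * h) \<alpha> \<noteq> 0"
    by (rule sum.not_neutral_contains_not_neutral)
  then obtain \<gamma> \<delta> where \<gamma>\<delta>: "\<delta> \<in> Poly_Mapping.keys h" "\<alpha> = \<gamma> + \<delta>"
    using keys_mult[of "c h" h] by (auto simp: in_keys_iff)
  obtain \<beta> where "P \<beta>" "h = Poly_Mapping.single \<beta> 1"
    using H(1) \<open>h \<in> H\<close> by blast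
  with \<gamma>\<delta> have "P \<beta> \<and> \<alpha> = \<gamma> + \<beta>" by simp
  then show ?thesis using mon_dvd_add by blast
qed

lemma mon_poly_in_LM_ideal_iff:
  assumes "Poly_Mapping.keys \<alpha> \<subseteq> V"
  shows "mon_poly \<alpha> \<in> LM_ideal (mpolys_in V) I \<longleftrightarrow> (\<exists>p\<in>I. p \<noteq> 0 \<and> mon_dvd (lead_mon p) \<alpha>)"
proof
  assume "mon_poly \<alpha> \<in> LM_ideal (mpolys_in V) I"
  then have "Poly_Mapping.single \<alpha> 1 \<in> ideal_gen (mpolys_in V)
      {Poly_Mapping.single \<beta> (1::'a) | \<beta>. \<exists>p. \<beta> = lead_mon p \<and> p \<in> I \<and> p \<noteq> 0}"
    unfolding LM_ideal_def mon_poly_def by (smt (verit) Collect_cong)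
  then show "\<exists>p\<in>I. p \<noteq> 0 \<and> mon_dvd (lead_mon p) \<alpha>"
    using mon_dvd_of_monomial_in_ideal_gen by fastforce
next
  assume "\<exists>p\<in>I. p \<noteq> 0 \<and> mon_dvd (lead_mon p) \<alpha>"
  then obtain p where p: "p \<in> I" "p \<noteq> 0" "mon_dvd (lead_mon p) \<alpha>" by blast
  let ?\<gamma> = "\<alpha> - lead_mon p"
  have eq: "mon_poly \<alpha> = Poly_Mapping.single ?\<gamma> 1 * mon_poly (lead_mon p)"
    using mon_dvd_diff_add[OF p(3)] by (simp add: mon_poly_def mult_single)
  have "Poly_Mapping.keys ?\<gamma> \<subseteq> V"
    using assms keys_diff[of \<alpha> "lead_mon p"] mon_dvd_keys[OF p(3)] by blast
  then have "Poly_Mapping.single ?\<gamma> 1 \<in> mpolys_in V" by (rule mpolys_in_single)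
  moreover have "mon_poly (lead_mon p) \<in> {mon_poly (lead_mon p) | p. p \<in> I \<and> p \<noteq> 0}"
    using p(1,2) by blast
  ultimately show "mon_poly \<alpha> \<in> LM_ideal (mpolys_in V) I"
    unfolding LM_ideal_def eq by (rule mult_in_ideal_gen[rotated])
qed

lemma lead_term_cancelE:
  fixes a g :: "'a::field mpoly"
  assumes "a \<in> mpolys_in V" "a \<noteq> 0" "g \<noteq> 0"
    and dvd: "mon_dvd (lead_mon g) (lead_mon a)"
  obtains s where "s \<in> mpolys_in V" "\<forall>\<beta>\<in>Poly_Mapping.keys (a - s * g). grevlex_less \<beta> (lead_mon a)"
proof -
  let ?\<alpha> = "lead_mon a" and ?\<gamma> = "lead_mon a - lead_mon g"
  let ?a = "Poly_Mapping.lookup a (lead_mon a)" and ?b = "Poly_Mapping.lookup g (lead_mon g)"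
  define s where "s = Poly_Mapping.single ?\<gamma> (?a / ?b)"
  have lead_a: "has_lead_term a ?\<alpha> ?a"
    using has_lead_term_lead_mon[OF assms(2)] .
  have lead_g: "has_lead_term g (lead_mon g) ?b"
    using has_lead_term_lead_mon[OF assms(3)] .
  have "?a \<noteq> 0" "?b \<noteq> 0"
    using lead_a lead_g unfolding has_lead_term_def by simp_all
  then have "has_lead_term (s * g) (?\<gamma> + lead_mon g) (?a / ?b * ?b)"
    unfolding s_def by (intro has_lead_term_mult[OF has_lead_term_single lead_g]) simp_all
  moreover have "?\<gamma> + lead_mon g = ?\<alpha>" "?a / ?b * ?b = ?a"
    using mon_dvd_diff_add[OF dvd] \<open>?b \<noteq> 0\<close> by simp_all
  ultimately have lead_sg: "has_lead_term (s * g) ?\<alpha> ?a" by simp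
  have "?\<alpha> \<in> Poly_Mapping.keys a"
    using \<open>?a \<noteq> 0\<close> by (simp add: in_keys_iff)
  then have "Poly_Mapping.keys ?\<alpha> \<subseteq> V"
    using assms(1) unfolding mpolys_in_def by blast
  then have "Poly_Mapping.keys ?\<gamma> \<subseteq> V"
    using keys_diff[of ?\<alpha> "lead_mon g"] mon_dvd_keys[OF dvd] by blast
  then have "s \<in> mpolys_in V" unfolding s_def by (rule mpolys_in_single)
  moreover have "grevlex_less \<beta> ?\<alpha>" if \<beta>: "\<beta> \<in> Poly_Mapping.keys (a - s * g)" for \<beta>
  proof -
    have "Poly_Mapping.lookup (a - s * g) ?\<alpha> = 0"
      using lead_a lead_sg by (simp add: has_lead_term_def lookup_minus)
    then have "\<beta> \<noteq> ?\<alpha>" using \<beta> by (auto simp: in_keys_iff)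
    consider "\<beta> \<in> Poly_Mapping.keys a" | "\<beta> \<in> Poly_Mapping.keys (s * g)"
      using \<beta> keys_diff[of a "s * g"] by blast
    then show ?thesis
      using lead_a lead_sg \<open>\<beta> \<noteq> ?\<alpha>\<close> unfolding has_lead_term_def by cases blast+
  qed
  ultimately show ?thesis using that by blast
qed

locale coprime_lead_mons =
  fixes V :: "var set" and n :: nat and g :: "nat \<Rightarrow> 'a::field mpoly"
  assumes finite_V: "finite V"
    and gen_in: "\<And>l. l < n \<Longrightarrow> g l \<in> mpolys_in V"
    and gen_nonzero: "\<And>l. l < n \<Longrightarrow> g l \<noteq> 0"
    and lead_mons_coprime:
      "\<And>l l'. l < n \<Longrightarrow> l' < n \<Longrightarrow> l \<noteq> l' \<Longrightarrow> mon_coprime (lead_mon (g l)) (lead_mon (g l'))"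
begin

abbreviation gen_ideal :: "nat \<Rightarrow> 'a mpoly set" where
  "gen_ideal j \<equiv> ideal_gen (mpolys_in V) (g ` {..<j})"

lemma gen_in_gen_ideal: "l < j \<Longrightarrow> s \<in> mpolys_in V \<Longrightarrow> s * g l \<in> gen_ideal j"
  by (rule mult_in_ideal_gen) auto

lemma reduce_lead_mon:
  assumes "j \<le> n"
  shows "a \<in> mpolys_in V \<Longrightarrow> \<exists>a'\<in>mpolys_in V. a - a' \<in> gen_ideal j \<and>
    (a' = 0 \<or> (\<forall>l<j. \<not> mon_dvd (lead_mon (g l)) (lead_mon a')))"
proof (induction "lead_mon a" arbitrary: a rule: grevlex_less_induct[OF finite_V])
  case (1 a)
  show ?case
  proof (cases "a = 0 \<or> (\<forall>l<j. \<not> mon_dvd (lead_mon (g l)) (lead_mon a))")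
    case True
    show ?thesis
    proof (rule bexI[of _ a])
      show "a - a \<in> gen_ideal j \<and> (a = 0 \<or> (\<forall>l<j. \<not> mon_dvd (lead_mon (g l)) (lead_mon a)))"
        using True zero_in_ideal_gen by simp
    qed (rule "1.prems")
  next
    case False
    then obtain l where l: "l < j" "mon_dvd (lead_mon (g l)) (lead_mon a)" and "a \<noteq> 0" by blast
    have "l < n" using l(1) assms by simp
    obtain s where s: "s \<in> mpolys_in V"
      and below: "\<forall>\<beta>\<in>Poly_Mapping.keys (a - s * g l). grevlex_less \<beta> (lead_mon a)"
      using lead_term_cancelE[OF "1.prems" \<open>a \<noteq> 0\<close> gen_nonzero[OF \<open>l < n\<close>] l(2)] .
    have sg: "s * g l \<in> gen_ideal j" using l(1) s by (rule gen_in_gen_ideal)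
    have a1: "a - s * g l \<in> mpolys_in V"
      by (rule mpolys_in_diff[OF "1.prems" mpolys_in_mult[OF s gen_in[OF \<open>l < n\<close>]]])
    show ?thesis
    proof (cases "a - s * g l = 0")
      case True
      then show ?thesis using sg by (intro bexI[of _ 0]) simp_all
    next
      case False
      then have "lead_mon (a - s * g l) \<in> Poly_Mapping.keys (a - s * g l)"
        by (rule lead_mon_in_keys)
      then have "Poly_Mapping.keys (lead_mon (a - s * g l)) \<subseteq> V"
        "grevlex_less (lead_mon (a - s * g l)) (lead_mon a)"
        using a1 below unfolding mpolys_in_def by blast+
      from "1.hyps"[OF this a1] obtain a' where a': "a' \<in> mpolys_in V" "a - s * g l - a' \<in> gen_ideal j"
        "a' = 0 \<or> (\<forall>l<j. \<not> mon_dvd (lead_mon (g l)) (lead_mon a'))"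
        by blast
      have "a - a' = s * g l + (a - s * g l - a')" by simp
      then have "a - a' \<in> gen_ideal j" using ideal_gen_add[OF sg a'(2)] by simp
      then show ?thesis using a' by blast
    qed
  qed
qed

text \<open>If the leading monomials of \<open>a * g j\<close> and \<open>b\<close> coincided, coprimality would make
  \<open>lead_mon a\<close> divisible by some earlier \<open>lead_mon (g l)\<close>; so no cancellation occurs.\<close>

lemma lead_mon_mult_gen_add:
  assumes j: "j < n" and a: "a \<noteq> 0" "\<forall>l<j. \<not> mon_dvd (lead_mon (g l)) (lead_mon a)"
    and b: "b \<noteq> 0 \<Longrightarrow> \<exists>l<j. mon_dvd (lead_mon (g l)) (lead_mon b)"
  shows "\<exists>l<Suc j. mon_dvd (lead_mon (g l)) (lead_mon (a * g j + b))"
proof -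
  let ?\<alpha> = "lead_mon a + lead_mon (g j)"
  have agj: "a * g j \<noteq> 0" "lead_mon (a * g j) = ?\<alpha>"
    using lead_mon_mult[OF a(1) gen_nonzero[OF j]] by simp_all
  have dvd_\<alpha>: "mon_dvd (lead_mon (g j)) ?\<alpha>"
    using mon_dvd_add[of "lead_mon (g j)" "lead_mon a"] by (simp add: add.commute)
  consider "b = 0 \<or> grevlex_less (lead_mon b) ?\<alpha>" | "b \<noteq> 0" "grevlex_less ?\<alpha> (lead_mon b)"
    | "b \<noteq> 0" "lead_mon b = ?\<alpha>"
    using grevlex_less_total by blast
  then show ?thesis
  proof cases
    case 1
    then have "lead_mon (a * g j + b) = ?\<alpha>"
      using lead_mon_add_lower[OF agj(1)] agj(2) by simp
    then show ?thesis using dvd_\<alpha> by auto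
  next
    case 2
    then have "lead_mon (a * g j + b) = lead_mon b"
      using lead_mon_add_lower[OF \<open>b \<noteq> 0\<close>, of "a * g j"] agj(2) by (simp add: add.commute)
    then show ?thesis using b[OF \<open>b \<noteq> 0\<close>] less_SucI by metis
  next
    case 3
    then obtain l where l: "l < j" "mon_dvd (lead_mon (g l)) ?\<alpha>" using b by auto
    moreover have "mon_coprime (lead_mon (g l)) (lead_mon (g j))"
      using lead_mons_coprime[of l j] l(1) j by simp
    ultimately have "mon_dvd (lead_mon (g l)) (lead_mon a)" using mon_dvd_coprime by blast
    then show ?thesis using a(2) l(1) by blast
  qed
qed

lemma lead_mon_dvd_initial:
  "j \<le> n \<Longrightarrow> h \<in> gen_ideal j \<Longrightarrow> h \<noteq> 0 \<Longrightarrow> \<exists>l<j. mon_dvd (lead_mon (g l)) (lead_mon h)"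
proof (induction j arbitrary: h)
  case 0
  then show ?case by (simp add: ideal_gen_empty)
next
  case (Suc j)
  have j: "j < n" "j \<le> n" using Suc.prems(1) by simp_all
  have "h \<in> ideal_gen (mpolys_in V) (insert (g j) (g ` {..<j}))"
    using Suc.prems(2) by (simp add: lessThan_Suc)
  then obtain c b where cb: "c \<in> mpolys_in V" "b \<in> gen_ideal j" "h = c * g j + b"
    using mpolys_in_0 by (rule ideal_gen_insertE)
  obtain a where a: "a \<in> mpolys_in V" "c - a \<in> gen_ideal j"
    "a = 0 \<or> (\<forall>l<j. \<not> mon_dvd (lead_mon (g l)) (lead_mon a))"
    using reduce_lead_mon[OF j(2) cb(1)] by blast
  define b' where "b' = b + g j * (c - a)"
  have b': "b' \<in> gen_ideal j"
    unfolding b'_def by (rule ideal_gen_add[OF cb(2) ideal_gen_mult[OF a(2) gen_in[OF j(1)]]])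
  have h: "h = a * g j + b'" using cb(3) by (simp add: b'_def algebra_simps)
  show ?case
  proof (cases "a = 0")
    case True
    then have "h = b'" using h by simp
    then obtain l where "l < j" "mon_dvd (lead_mon (g l)) (lead_mon h)"
      using Suc.IH[OF j(2) b'] Suc.prems(3) by blast
    then show ?thesis using less_SucI by blast
  next
    case False
    then show ?thesis
      unfolding h using lead_mon_mult_gen_add[OF j(1) False] a(3) Suc.IH[OF j(2) b'] by blast
  qed
qed

lemma ex_lead_mon_dvd_iff:
  "(\<exists>p\<in>gen_ideal n. p \<noteq> 0 \<and> mon_dvd (lead_mon p) \<alpha>) \<longleftrightarrow> (\<exists>l<n. mon_dvd (lead_mon (g l)) \<alpha>)"
proof
  assume "\<exists>p\<in>gen_ideal n. p \<noteq> 0 \<and> mon_dvd (lead_mon p) \<alpha>"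
  then show "\<exists>l<n. mon_dvd (lead_mon (g l)) \<alpha>"
    using lead_mon_dvd_initial[OF order.refl] mon_dvd_trans by blast
next
  assume "\<exists>l<n. mon_dvd (lead_mon (g l)) \<alpha>"
  then obtain l where "l < n" "mon_dvd (lead_mon (g l)) \<alpha>" by blast
  moreover have "g l \<in> gen_ideal n"
    using gen_in_gen_ideal[OF \<open>l < n\<close>, of 1] by simp
  ultimately show "\<exists>p\<in>gen_ideal n. p \<noteq> 0 \<and> mon_dvd (lead_mon p) \<alpha>"
    using gen_nonzero by blast
qed

end

definition term_vars :: "nat \<Rightarrow> (nat \<Rightarrow> nat) \<Rightarrow> (nat \<Rightarrow> nat) \<Rightarrow> var set" where
  "term_vars m p f = (\<lambda>i. (f i, i, p i)) ` {..<m}"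

definition level_funs :: "nat \<Rightarrow> nat \<Rightarrow> nat \<Rightarrow> (nat \<Rightarrow> nat) set" where
  "level_funs m k l = {f \<in> {..<m} \<rightarrow>\<^sub>E {..<k}. sum f {..<m} = l}"

lemma term_vars_row: "i < m \<Longrightarrow> (a, i, c) \<in> term_vars m p f \<longleftrightarrow> a = f i \<and> c = p i"
  by (auto simp: term_vars_def)

lemma card_term_vars: "card (term_vars m p f) = m"
  unfolding term_vars_def by (subst card_image) (auto intro: inj_onI)

lemma finite_term_vars [simp]: "finite (term_vars m p f)"
  by (simp add: term_vars_def)

lemma term_vars_subset_vars:
  assumes "p permutes {..<m}" "f \<in> level_funs m k l"
  shows "term_vars m p f \<subseteq> vars m k"
  using assms permutes_in_image[OF assms(1)] by (auto simp: term_vars_def level_funs_def vars_def)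

lemma finite_level_funs: "finite (level_funs m k l)"
  unfolding level_funs_def by (rule finite_subset[of _ "{..<m} \<rightarrow>\<^sub>E {..<k}"]) (auto intro: finite_PiE)

lemma prod_monom: "finite I \<Longrightarrow> (\<Prod>i\<in>I. monom (c i) (e i)) = monom (\<Prod>i\<in>I. c i) (\<Sum>i\<in>I. e i)"
  by (induction I rule: finite_induct) (auto simp: mult_monom)

lemma prod_single_one:
  "finite I \<Longrightarrow> (\<Prod>i\<in>I. Poly_Mapping.single (a i) (1::'b::comm_semiring_1)) = Poly_Mapping.single (\<Sum>i\<in>I. a i) 1"
  by (induction I rule: finite_induct) (auto simp: mult_single)

lemma prod_Var_term_vars:
  "(\<Prod>i<m. Var (f i, i, p i)) = Poly_Mapping.single (sqfree_mon (term_vars m p f)) (1::'a::comm_ring_1)"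
proof -
  have "sqfree_mon (term_vars m p f) = (\<Sum>i<m. Poly_Mapping.single (f i, i, p i) 1)"
    unfolding sqfree_mon_def term_vars_def by (subst sum.reindex) (auto intro: inj_onI)
  then show ?thesis by (simp add: Var_def prod_single_one)
qed

lemma det_Xt:
  "det (Xt m k :: 'a::comm_ring_1 mpoly poly mat) =
    (\<Sum>p | p permutes {..<m}. signof p * (\<Prod>i<m. xt k i (p i)))"
proof -
  have "det (Xt m k :: 'a mpoly poly mat) =
      (\<Sum>p | p permutes {0..<m}. signof p * (\<Prod>i=0..<m. Xt m k $$ (i, p i)))"
    by (rule det_def') (simp add: Xt_def)
  also have "\<dots> = (\<Sum>p | p permutes {..<m}. signof p * (\<Prod>i<m. xt k i (p i)))"
  proof (rule sum.cong)
    show "{p. p permutes {0..<m}} = {p. p permutes {..<m}}" by (simp add: atLeast0LessThan)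
  next
    fix p assume "p \<in> {p. p permutes {..<m}}"
    then have "Xt m k $$ (i, p i) = (xt k i (p i) :: 'a mpoly poly)" if "i < m" for i
      using that permutes_in_image[of p "{..<m}" i] by (simp add: Xt_def)
    then show "signof p * (\<Prod>i=0..<m. Xt m k $$ (i, p i)) = signof p * (\<Prod>i<m. xt k i (p i) :: 'a mpoly poly)"
      unfolding atLeast0LessThan by (intro arg_cong[where f = "(*) (signof p)"] prod.cong) simp_all
  qed
  finally show ?thesis .
qed

lemma coeff_det_Xt:
  "coeff (det (Xt m k)) l =
    (\<Sum>(p, f) \<in> {p. p permutes {..<m}} \<times> level_funs m k l.
      Poly_Mapping.single (sqfree_mon (term_vars m p f)) (of_int (sign p) :: 'a::comm_ring_1))"
proof -
  have coeff_prod: "coeff (\<Prod>i<m. xt k i (p i) :: 'a mpoly poly) l =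
      (\<Sum>f\<in>level_funs m k l. Poly_Mapping.single (sqfree_mon (term_vars m p f)) 1)" for p :: "nat \<Rightarrow> nat"
  proof -
    have "(\<Prod>i<m. xt k i (p i) :: 'a mpoly poly) =
        (\<Sum>f\<in>{..<m} \<rightarrow>\<^sub>E {..<k}. \<Prod>i<m. monom (Var (f i, i, p i)) (f i))"
      unfolding xt_def by (rule prod_sum_PiE) auto
    also have "\<dots> = (\<Sum>f\<in>{..<m} \<rightarrow>\<^sub>E {..<k}.
        monom (Poly_Mapping.single (sqfree_mon (term_vars m p f)) 1) (sum f {..<m}))"
      by (simp add: prod_monom prod_Var_term_vars)
    finally show ?thesis
      unfolding level_funs_def by (simp add: coeff_sum sum.inter_filter finite_PiE)
  qed
  have sign_single: "of_int (sign p) * Poly_Mapping.single \<alpha> (1::'a) = Poly_Mapping.single \<alpha> (of_int (sign p))"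
    for p :: "nat \<Rightarrow> nat" and \<alpha> :: monomial
    by (metis mult_single single_of_int add_0 mult.right_neutral)
  have "coeff (det (Xt m k)) l = (\<Sum>p | p permutes {..<m}. of_int (sign p) * coeff (\<Prod>i<m. xt k i (p i) :: 'a mpoly poly) l)"
    by (simp add: det_Xt coeff_sum of_int_poly)
  also have "\<dots> = (\<Sum>p | p permutes {..<m}. \<Sum>f\<in>level_funs m k l.
      Poly_Mapping.single (sqfree_mon (term_vars m p f)) (of_int (sign p)))"
    by (simp add: coeff_prod sum_distrib_left sign_single)
  also have "\<dots> = (\<Sum>(p, f) \<in> {p. p permutes {..<m}} \<times> level_funs m k l.
      Poly_Mapping.single (sqfree_mon (term_vars m p f)) (of_int (sign p)))"
    by (rule sum.cartesian_product)
  finally show ?thesis .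
qed

section \<open>The leading monomials of the coefficients\<close>

text \<open>With \<open>s = l + i\<close>, row \<open>i\<close> of the leading monomial of the coefficient of \<open>t^l\<close> carries
  the variable \<open>x^(s div m)_(i, m - 1 - s mod m)\<close>: the first \<open>m - l mod m\<close> rows sit at level
  \<open>l div m\<close>, the remaining rows one level higher, and both blocks run along anti-diagonals.\<close>

definition lead_level :: "nat \<Rightarrow> nat \<Rightarrow> nat \<Rightarrow> nat" where
  "lead_level m l = (\<lambda>i\<in>{..<m}. (l + i) div m)"

definition lead_perm :: "nat \<Rightarrow> nat \<Rightarrow> nat \<Rightarrow> nat" where
  "lead_perm m l i = (if i < m then m - 1 - (l + i) mod m else i)"

definition lead_vars :: "nat \<Rightarrow> nat \<Rightarrow> var set" where
  "lead_vars m l = term_vars m (lead_perm m l) (lead_level m l)"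

lemma add_div_mod_cases:
  fixes i l m :: nat
  assumes "i < m"
  shows "(l + i) div m = l div m + (if l mod m + i < m then 0 else 1)"
    and "(l + i) mod m = (if l mod m + i < m then l mod m + i else l mod m + i - m)"
proof -
  let ?x = "l mod m + i"
  have "l mod m < m" using assms by simp
  then have x: "?x < 2 * m" using assms by linarith
  have "(l + i) div m = l div m + ?x div m"
    using div_add1_eq[of l i m] assms by simp
  moreover have "(l + i) mod m = ?x mod m"
    by (simp add: mod_add_left_eq)
  moreover have "?x div m = (if ?x < m then 0 else 1) \<and> ?x mod m = (if ?x < m then ?x else ?x - m)"
  proof (cases "?x < m")
    case False
    then have "?x div m = Suc ((?x - m) div m)" "?x mod m = (?x - m) mod m"
      using le_div_geq[of m ?x] le_mod_geq[of m ?x] assms by simp_all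
    moreover have "?x - m < m" using x by linarith
    ultimately show ?thesis using False by simp
  qed simp
  ultimately show "(l + i) div m = l div m + (if l mod m + i < m then 0 else 1)"
    "(l + i) mod m = (if l mod m + i < m then l mod m + i else l mod m + i - m)"
    by simp_all
qed

lemma sum_add_div: "0 < m \<Longrightarrow> (\<Sum>i<m. (l + i) div m) = (l::nat)"
proof (induction l)
  case 0
  then show ?case by simp
next
  case (Suc l)
  have "(\<Sum>i<m. (Suc l + i) div m) + l div m = (\<Sum>i<Suc m. (l + i) div m)"
    by (simp add: sum.lessThan_Suc_shift del: sum.lessThan_Suc)
  also have "\<dots> = l + (l + m) div m"
    using Suc by simp
  also have "(l + m) div m = Suc (l div m)"
    using Suc.prems by simp
  finally show ?case by simp
qed

lemma lead_perm_lt: "i < m \<Longrightarrow> lead_perm m l i < m"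
  by (simp add: lead_perm_def)

lemma lead_perm_permutes:
  assumes "0 < m"
  shows "lead_perm m l permutes {..<m}"
proof (rule bij_imp_permutes)
  have "inj_on (lead_perm m l) {..<m}"
  proof (rule inj_onI)
    fix i i' assume "i \<in> {..<m}" "i' \<in> {..<m}" "lead_perm m l i = lead_perm m l i'"
    then have "m - 1 - (l + i) mod m = m - 1 - (l + i') mod m" "i < m" "i' < m"
      by (simp_all add: lead_perm_def)
    moreover have "(l + i) mod m < m" "(l + i') mod m < m"
      using assms by simp_all
    ultimately have "(l + i) mod m = (l + i') mod m" "i < m" "i' < m" by arith+
    then show "i = i'"
      using add_div_mod_cases(2)[of i m l] add_div_mod_cases(2)[of i' m l] by (auto split: if_splits)
  qed
  moreover have "lead_perm m l ` {..<m} \<subseteq> {..<m}"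
    using lead_perm_lt by auto
  ultimately show "bij_betw (lead_perm m l) {..<m} {..<m}"
    by (simp add: bij_betw_def endo_inj_surj)
qed (simp add: lead_perm_def)

lemma lead_level_in_level_funs:
  assumes "0 < m" "l < k"
  shows "lead_level m l \<in> level_funs m k l"
proof -
  have "(l + i) div m < k" if "i < m" for i
  proof -
    have "l \<le> l * m" using assms(1) by simp
    then have "l + i < m + l * m" using that by linarith
    then have "l + i < Suc l * m" by simp
    then have "(l + i) div m < Suc l" by (rule less_mult_imp_div_less)
    then show ?thesis using assms(2) by simp
  qed
  then show ?thesis
    using sum_add_div[OF assms(1)] by (simp add: level_funs_def lead_level_def)
qed

lemma level_funs_eq_lead_level:
  assumes "0 < m" "f \<in> level_funs m k l" "\<And>i. i < m \<Longrightarrow> lead_level m l i \<le> f i" "i < m"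
  shows "f i = lead_level m l i"
proof -
  have "sum (lead_level m l) {..<m} = sum f {..<m}"
    using assms(2) lead_level_in_level_funs[OF assms(1), of l "Suc l"] by (simp add: level_funs_def)
  then show ?thesis
    using sum_mono_inv[of "lead_level m l" "{..<m}" f i] assms(3,4) by simp
qed

lemma term_vars_eq_lead_vars:
  assumes "p permutes {..<m}" "f \<in> level_funs m k l" "term_vars m p f = lead_vars m l"
  shows "p = lead_perm m l" "f = lead_level m l"
proof -
  have row: "f i = lead_level m l i \<and> p i = lead_perm m l i" if "i < m" for i
  proof -
    have "(f i, i, p i) \<in> term_vars m p f" using that by (simp add: term_vars_row)
    then have "(f i, i, p i) \<in> term_vars m (lead_perm m l) (lead_level m l)"
      using assms(3) by (simp add: lead_vars_def)
    then show ?thesis using that by (simp add: term_vars_row)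
  qed
  show "p = lead_perm m l"
  proof
    fix i show "p i = lead_perm m l i"
      using row assms(1) by (cases "i < m") (auto simp: permutes_def lead_perm_def)
  qed
  show "f = lead_level m l"
  proof
    fix i show "f i = lead_level m l i"
      using row assms(2) by (cases "i < m") (auto simp: level_funs_def lead_level_def PiE_def extensional_def)
  qed
qed

lemma lead_vars_disjoint:
  assumes "l \<noteq> l'"
  shows "lead_vars m l \<inter> lead_vars m l' = {}"
proof -
  have False if "(a, i, c) \<in> lead_vars m l" "(a, i, c) \<in> lead_vars m l'" for a i c
  proof -
    have i: "i < m" using that(1) by (auto simp: lead_vars_def term_vars_def)
    then have "(l + i) div m = (l' + i) div m" "m - 1 - (l + i) mod m = m - 1 - (l' + i) mod m"
      using that term_vars_row[OF i] unfolding lead_vars_def lead_level_def lead_perm_def by auto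
    moreover have "(l + i) mod m < m" "(l' + i) mod m < m" using i by simp_all
    ultimately have "(l + i) mod m = (l' + i) mod m" by linarith
    with \<open>(l + i) div m = (l' + i) div m\<close> have "l + i = l' + i"
      by (metis div_mult_mod_eq)
    then show False using assms by simp
  qed
  then show ?thesis by auto
qed

lemma lead_vars_ordered_by_column:
  assumes "i < m" "i' < m" "lead_perm m l i < lead_perm m l i'"
  shows "var_less (lead_level m l i, i, c) (lead_level m l i', i', c')"
proof -
  have "l mod m < m" using assms(1) by simp
  then show ?thesis
    using assms add_div_mod_cases[OF assms(1), of l] add_div_mod_cases[OF assms(2), of l]
    by (auto simp: lead_level_def lead_perm_def split: if_splits)
qed

lemma below_lead_level:
  assumes "i < m" "i\<^sub>0 < m" "a < lead_level m l i"
  shows "var_less (a, i, c) (lead_level m l i\<^sub>0, i\<^sub>0, c')"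
  using assms add_div_mod_cases(1)[OF assms(1), of l] add_div_mod_cases(1)[OF assms(2), of l]
  by (auto simp: lead_level_def split: if_splits)

lemma term_vars_below_lead_vars:
  assumes m: "0 < m" and p: "p permutes {..<m}" and f: "f \<in> level_funs m k l"
    and v: "v \<in> lead_vars m l - term_vars m p f"
  shows "\<exists>w\<in>term_vars m p f - lead_vars m l. var_less w v"
proof -
  let ?lev = "lead_level m l" and ?sig = "lead_perm m l"
  obtain i\<^sub>0 where i\<^sub>0: "i\<^sub>0 < m" "v = (?lev i\<^sub>0, i\<^sub>0, ?sig i\<^sub>0)"
    using v by (auto simp: lead_vars_def term_vars_def)
  have not_lead: "(f i, i, p i) \<in> term_vars m p f - lead_vars m l"
    if "i < m" "f i \<noteq> ?lev i \<or> p i \<noteq> ?sig i" for i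
    using that by (auto simp: lead_vars_def term_vars_row)
  have row_i\<^sub>0: "f i\<^sub>0 \<noteq> ?lev i\<^sub>0 \<or> p i\<^sub>0 \<noteq> ?sig i\<^sub>0"
    using v i\<^sub>0 by (auto simp: term_vars_row)
  show ?thesis
  proof (cases "\<exists>i<m. f i < ?lev i")
    case True
    then obtain i where "i < m" "f i < ?lev i" by blast
    then show ?thesis
      using not_lead below_lead_level[OF _ i\<^sub>0(1)] i\<^sub>0(2) by (metis less_irrefl)
  next
    case False
    then have levels: "f i = ?lev i" if "i < m" for i
      using level_funs_eq_lead_level[OF m f _ that] by (metis not_less)
    then have "p i\<^sub>0 \<noteq> ?sig i\<^sub>0" using row_i\<^sub>0 i\<^sub>0(1) by blast
    then consider "?sig i\<^sub>0 < p i\<^sub>0" | "p i\<^sub>0 < ?sig i\<^sub>0" by linarith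
    then show ?thesis
    proof cases
      case 1
      then have "var_less (f i\<^sub>0, i\<^sub>0, p i\<^sub>0) v"
        using levels[OF i\<^sub>0(1)] i\<^sub>0(2) by simp
      then show ?thesis
        using not_lead[OF i\<^sub>0(1)] \<open>p i\<^sub>0 \<noteq> ?sig i\<^sub>0\<close> by blast
    next
      case 2
      have "p i\<^sub>0 \<in> ?sig ` {..<m}"
        using permutes_in_image[OF p] permutes_image[OF lead_perm_permutes[OF m]] i\<^sub>0(1) by simp
      then obtain i\<^sub>1 where i\<^sub>1: "i\<^sub>1 < m" "?sig i\<^sub>1 = p i\<^sub>0" by auto
      then have "i\<^sub>1 \<noteq> i\<^sub>0" using \<open>p i\<^sub>0 \<noteq> ?sig i\<^sub>0\<close> by auto
      then have "p i\<^sub>1 \<noteq> ?sig i\<^sub>1"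
        using i\<^sub>1 i\<^sub>0(1) permutes_inj_on[OF p] by (auto dest: inj_onD)
      moreover have "var_less (f i\<^sub>1, i\<^sub>1, p i\<^sub>1) v"
        using lead_vars_ordered_by_column[OF i\<^sub>1(1) i\<^sub>0(1)] i\<^sub>1 2 i\<^sub>0(2) levels[OF i\<^sub>1(1)] by simp
      ultimately show ?thesis
        using not_lead[OF i\<^sub>1(1)] by blast
    qed
  qed
qed

lemma has_lead_term_coeff_det:
  assumes m: "0 < m" and l: "l < k"
  shows "has_lead_term (coeff (det (Xt m k)) l :: 'a::field mpoly)
    (sqfree_mon (lead_vars m l)) (of_int (sign (lead_perm m l)))"
proof -
  let ?X = "{p. p permutes {..<m}} \<times> level_funs m k l"
  let ?x\<^sub>0 = "(lead_perm m l, lead_level m l)"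
  define \<mu> where "\<mu> x = sqfree_mon (term_vars m (fst x) (snd x))" for x :: "(nat \<Rightarrow> nat) \<times> (nat \<Rightarrow> nat)"
  define c where "c x = (of_int (sign (fst x)) :: 'a)" for x :: "(nat \<Rightarrow> nat) \<times> (nat \<Rightarrow> nat)"
  have "has_lead_term (\<Sum>x\<in>?X. Poly_Mapping.single (\<mu> x) (c x)) (\<mu> ?x\<^sub>0) (c ?x\<^sub>0)"
  proof (rule has_lead_term_sum_single)
    show "finite ?X" by (simp add: finite_permutations finite_level_funs)
    show "?x\<^sub>0 \<in> ?X"
      using lead_perm_permutes[OF m] lead_level_in_level_funs[OF m l] by simp
    show "c ?x\<^sub>0 \<noteq> 0"
      by (simp add: c_def sign_def)
  next
    fix x assume x: "x \<in> ?X" "x \<noteq> ?x\<^sub>0"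
    obtain p f where pf: "x = (p, f)" "p permutes {..<m}" "f \<in> level_funs m k l"
      using x(1) by auto
    then have "term_vars m p f \<noteq> lead_vars m l"
      using x(2) term_vars_eq_lead_vars by blast
    then show "grevlex_less (\<mu> x) (\<mu> ?x\<^sub>0)"
      unfolding \<mu>_def pf(1) fst_conv snd_conv lead_vars_def[symmetric]
      using term_vars_below_lead_vars[OF m pf(2,3)] card_term_vars
      by (intro grevlex_less_sqfree_mon) (auto simp: lead_vars_def term_vars_def)
  qed
  moreover have "coeff (det (Xt m k)) l = (\<Sum>x\<in>?X. Poly_Mapping.single (\<mu> x) (c x))"
    unfolding coeff_det_Xt \<mu>_def c_def by (simp add: case_prod_unfold)
  ultimately show ?thesis
    by (simp add: \<mu>_def c_def lead_vars_def)
qed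

section \<open>The Stanley--Reisner complex of the leading monomials\<close>

lemma vars_eq: "vars m k = {..<k} \<times> {..<m} \<times> {..<m}"
  by (auto simp: vars_def)

lemma finite_vars: "finite (vars m k)"
  by (simp add: vars_eq)

lemma card_vars: "card (vars m k) = k * (m * m)"
  by (simp add: vars_eq card_cartesian_product)

lemma lead_mon_coeff_det:
  "0 < m \<Longrightarrow> l < k \<Longrightarrow> lead_mon (coeff (det (Xt m k)) l :: 'a::field mpoly) = sqfree_mon (lead_vars m l)"
  using has_lead_term_coeff_det by (rule lead_mon_eqI)

lemma coeff_det_in_S_ring: "coeff (det (Xt m k)) l \<in> mpolys_in (vars m k)"
  unfolding coeff_det_Xt
proof (intro mpolys_in_sum)
  fix x assume "x \<in> {p. p permutes {..<m}} \<times> level_funs m k l"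
  then obtain p f where "x = (p, f)" "p permutes {..<m}" "f \<in> level_funs m k l" by auto
  then show "(case x of (p, f) \<Rightarrow> Poly_Mapping.single (sqfree_mon (term_vars m p f)) (of_int (sign p))) \<in> mpolys_in (vars m k)"
    using term_vars_subset_vars[of p m f k l] by (simp add: mpolys_in_single keys_sqfree_mon)
qed

lemma I_det_eq_ideal_gen:
  "I_det m k = ideal_gen (mpolys_in (vars m k)) ((\<lambda>l. coeff (det (Xt m k)) l) ` {..<k})"
proof -
  have "(det_gens m k :: 'a mpoly set) = (\<lambda>l. coeff (det (Xt m k)) l) ` {..<k}"
    unfolding det_gens_def by auto
  then show ?thesis by (simp add: I_det_def S_ring_eq_mpolys_in)
qed

lemma coprime_lead_mons_det:
  assumes "0 < m"
  shows "coprime_lead_mons (vars m k) k (\<lambda>l. coeff (det (Xt m k)) l :: 'a::field mpoly)"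
proof
  show "finite (vars m k)" by (rule finite_vars)
  fix l l' assume "l < k"
  show "(coeff (det (Xt m k)) l :: 'a mpoly) \<in> mpolys_in (vars m k)"
    by (rule coeff_det_in_S_ring)
  show "(coeff (det (Xt m k)) l :: 'a mpoly) \<noteq> 0"
    using has_lead_term_coeff_det[OF assms \<open>l < k\<close>] by (rule has_lead_term_nonzero)
  assume "l' < k" "l \<noteq> l'"
  then show "mon_coprime (lead_mon (coeff (det (Xt m k)) l :: 'a mpoly)) (lead_mon (coeff (det (Xt m k)) l' :: 'a mpoly))"
    unfolding lead_mon_coeff_det[OF assms \<open>l < k\<close>] lead_mon_coeff_det[OF assms \<open>l' < k\<close>]
    using lead_vars_disjoint[OF \<open>l \<noteq> l'\<close>] by (simp add: mon_coprime_sqfree_mon lead_vars_def)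
qed

lemma SR_complex_det:
  assumes "0 < m"
  shows "SR_complex (vars m k) (LM_ideal (S_ring m k) (I_det m k :: 'a::field mpoly set)) =
    {A. A \<subseteq> vars m k \<and> (\<forall>l<k. \<not> lead_vars m l \<subseteq> A)}"
proof -
  interpret coprime_lead_mons "vars m k" k "\<lambda>l. coeff (det (Xt m k)) l :: 'a mpoly"
    by (rule coprime_lead_mons_det[OF assms])
  have "mon_poly (sqfree_mon A) \<in> LM_ideal (S_ring m k) (I_det m k :: 'a mpoly set) \<longleftrightarrow>
      (\<exists>l<k. lead_vars m l \<subseteq> A)" if A: "A \<subseteq> vars m k" for A
  proof -
    have "finite A" using A finite_V finite_subset by blast
    have "mon_poly (sqfree_mon A) \<in> LM_ideal (S_ring m k) (I_det m k :: 'a mpoly set) \<longleftrightarrow>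
        (\<exists>p\<in>gen_ideal k. p \<noteq> 0 \<and> mon_dvd (lead_mon p) (sqfree_mon A))"
      unfolding S_ring_eq_mpolys_in I_det_eq_ideal_gen
      by (rule mon_poly_in_LM_ideal_iff) (simp add: keys_sqfree_mon \<open>finite A\<close> A)
    also have "\<dots> \<longleftrightarrow> (\<exists>l<k. mon_dvd (lead_mon (coeff (det (Xt m k)) l :: 'a mpoly)) (sqfree_mon A))"
      by (rule ex_lead_mon_dvd_iff)
    also have "\<dots> \<longleftrightarrow> (\<exists>l<k. lead_vars m l \<subseteq> A)"
    proof -
      have "mon_dvd (lead_mon (coeff (det (Xt m k)) l :: 'a mpoly)) (sqfree_mon A) \<longleftrightarrow> lead_vars m l \<subseteq> A"
        if "l < k" for l
        unfolding lead_mon_coeff_det[OF assms that]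
        using \<open>finite A\<close> by (simp add: mon_dvd_sqfree_mon_iff lead_vars_def)
      then show ?thesis by blast
    qed
    finally show ?thesis .
  qed
  then show ?thesis
    unfolding SR_complex_def by blast
qed

section \<open>Counting faces\<close>

definition size_gf :: "'v set set \<Rightarrow> int poly" where
  "size_gf \<A> = (\<Sum>A\<in>\<A>. monom 1 (card A))"

definition binomial_head :: "nat \<Rightarrow> int poly" where
  "binomial_head m = (\<Sum>j<m. [:0, 1:] ^ j * [:int (m choose j):])"

lemma coeff_size_gf: "finite \<A> \<Longrightarrow> coeff (size_gf \<A>) l = int (f_vec \<A> l)"
  unfolding size_gf_def coeff_sum f_vec_def by (simp add: sum.inter_filter[symmetric])

lemma degree_size_gf:
  assumes "finite \<A>" "\<A> \<noteq> {}"
  shows "degree (size_gf \<A>) = Max (card ` \<A>)"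
proof (rule antisym)
  show "degree (size_gf \<A>) \<le> Max (card ` \<A>)"
    using assms by (intro degree_le) (auto simp: coeff_size_gf f_vec_def)
  have "Max (card ` \<A>) \<in> card ` \<A>"
    using assms by (intro Max_in) auto
  then obtain A where "A \<in> \<A>" "card A = Max (card ` \<A>)" by auto
  then have "coeff (size_gf \<A>) (Max (card ` \<A>)) \<noteq> 0"
    using assms(1) by (auto simp: coeff_size_gf f_vec_def)
  then show "Max (card ` \<A>) \<le> degree (size_gf \<A>)"
    by (rule le_degree)
qed

lemma sc_dim_eq_degree_size_gf:
  "finite \<Delta> \<Longrightarrow> \<Delta> \<noteq> {} \<Longrightarrow> sc_dim \<Delta> = int (degree (size_gf \<Delta>)) - 1"
  by (simp add: sc_dim_def degree_size_gf)

lemma size_gf_Pow: "finite W \<Longrightarrow> size_gf (Pow W) = [:1, 1:] ^ card W"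
proof (induction W rule: finite_induct)
  case empty
  then show ?case by (simp add: size_gf_def)
next
  case (insert a W)
  have "inj_on (insert a) (Pow W)"
    unfolding inj_on_def by (metis PowD Diff_insert_absorb insert.hyps(2) subsetD)
  then have "size_gf (Pow (insert a W)) = size_gf (Pow W) + (\<Sum>A\<in>Pow W. monom 1 (card (insert a A)))"
    unfolding size_gf_def Pow_insert using insert.hyps
    by (subst sum.union_disjoint) (auto simp: sum.reindex)
  also have "(\<Sum>A\<in>Pow W. monom 1 (card (insert a A))) = [:0, 1:] * size_gf (Pow W)"
    unfolding size_gf_def sum_distrib_left using insert.hyps
    by (intro sum.cong) (auto simp: finite_subset monom_Suc card_insert_if)
  finally show ?case
    using insert by (simp add: algebra_simps)
qed

lemma power_one_plus_X: "[:1, 1:] ^ m = binomial_head m + [:0, 1:] ^ m"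
proof -
  have "[:1, 1:] ^ m = ([:0, 1:] + 1 :: int poly) ^ m" by (simp add: one_pCons)
  also have "\<dots> = (\<Sum>j\<le>m. [:0, 1:] ^ j * [:int (m choose j):])"
    by (simp add: binomial_ring of_nat_poly mult.commute)
  also have "\<dots> = binomial_head m + [:0, 1:] ^ m"
    by (simp add: binomial_head_def lessThan_Suc_atMost[symmetric])
  finally show ?thesis .
qed

lemma size_gf_proper_subsets: "finite B \<Longrightarrow> size_gf (Pow B - {B}) = binomial_head (card B)"
  using size_gf_Pow[of B] power_one_plus_X[of "card B"]
  by (simp add: size_gf_def sum_diff1 monom_altdef)

lemma size_gf_join:
  assumes "finite \<A>" "finite \<C>" "\<forall>A\<in>\<A>. A \<subseteq> U" "\<forall>C\<in>\<C>. C \<subseteq> U'" "U \<inter> U' = {}" "finite U" "finite U'"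
  shows "size_gf ((\<lambda>(A, C). A \<union> C) ` (\<A> \<times> \<C>)) = size_gf \<A> * size_gf \<C>"
proof -
  have "inj_on (\<lambda>(A, C). A \<union> C) (\<A> \<times> \<C>)"
  proof (rule inj_onI, clarify)
    fix A C A' C' assume "A \<in> \<A>" "C \<in> \<C>" "A' \<in> \<A>" "C' \<in> \<C>" "A \<union> C = A' \<union> C'"
    then have "A = (A \<union> C) \<inter> U" "A' = (A' \<union> C') \<inter> U" "C = (A \<union> C) \<inter> U'" "C' = (A' \<union> C') \<inter> U'"
      using assms(3-5) by blast+
    then show "A = A' \<and> C = C'" using \<open>A \<union> C = A' \<union> C'\<close> by simp
  qed
  then have "size_gf ((\<lambda>(A, C). A \<union> C) ` (\<A> \<times> \<C>)) = (\<Sum>(A, C)\<in>\<A> \<times> \<C>. monom 1 (card (A \<union> C)))"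
    unfolding size_gf_def by (simp add: sum.reindex case_prod_unfold)
  also have "\<dots> = (\<Sum>(A, C)\<in>\<A> \<times> \<C>. monom 1 (card A) * monom 1 (card C))"
  proof (rule sum.cong[OF refl], clarify)
    fix A C assume "A \<in> \<A>" "C \<in> \<C>"
    then have "A \<subseteq> U" "C \<subseteq> U'" using assms(3,4) by blast+
    then have "card (A \<union> C) = card A + card C"
      using assms(5-7) by (intro card_Un_disjoint) (auto intro: finite_subset)
    then show "monom 1 (card (A \<union> C)) = (monom 1 (card A) * monom 1 (card C) :: int poly)"
      by (simp add: mult_monom)
  qed
  also have "\<dots> = size_gf \<A> * size_gf \<C>"
    unfolding size_gf_def sum_product sum.cartesian_product ..
  finally show ?thesis .
qed

lemma avoiding_Suc_eq_join:
  assumes "B n \<subseteq> W" "\<And>l. l < n \<Longrightarrow> B l \<inter> B n = {}"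
  shows "{A. A \<subseteq> W \<and> (\<forall>l<Suc n. \<not> B l \<subseteq> A)} =
    (\<lambda>(A, C). A \<union> C) ` ({A. A \<subseteq> W - B n \<and> (\<forall>l<n. \<not> B l \<subseteq> A)} \<times> (Pow (B n) - {B n}))"
    (is "?F = (\<lambda>(A, C). A \<union> C) ` (?F' \<times> ?P)")
proof (intro equalityI subsetI)
  fix A assume A: "A \<in> ?F"
  have "\<not> B l \<subseteq> A - B n" if "l < n" for l
  proof
    assume "B l \<subseteq> A - B n"
    then have "B l \<subseteq> A" by blast
    moreover have "l < Suc n" using that by simp
    ultimately show False using A by blast
  qed
  moreover have "\<not> B n \<subseteq> A" using A by blast
  ultimately have "(A - B n, A \<inter> B n) \<in> ?F' \<times> ?P"
    using A by auto
  then show "A \<in> (\<lambda>(A, C). A \<union> C) ` (?F' \<times> ?P)"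
    by (rule rev_image_eqI) auto
next
  fix X assume "X \<in> (\<lambda>(A, C). A \<union> C) ` (?F' \<times> ?P)"
  then obtain A C where X: "X = A \<union> C" "A \<subseteq> W - B n" "\<forall>l<n. \<not> B l \<subseteq> A" "C \<subset> B n" by auto
  have "\<not> B l \<subseteq> X" if "l < Suc n" for l
  proof (cases "l < n")
    case True
    then show ?thesis using X(1,3,4) assms(2)[OF True] by blast
  next
    case False
    then have "l = n" using that by simp
    then show ?thesis using X(1,2,4) by blast
  qed
  then show "X \<in> ?F" using X(1,2,4) assms(1) by blast
qed

lemma size_gf_avoiding:
  assumes "finite W" "\<forall>l<n. B l \<subseteq> W \<and> card (B l) = m"
    and "\<forall>l<n. \<forall>l'<n. l \<noteq> l' \<longrightarrow> B l \<inter> B l' = {}"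
  shows "size_gf {A. A \<subseteq> W \<and> (\<forall>l<n. \<not> B l \<subseteq> A)} = binomial_head m ^ n * [:1, 1:] ^ (card W - n * m)"
  using assms
proof (induction n arbitrary: W)
  case 0
  then show ?case using size_gf_Pow[of W] by (simp add: Pow_def)
next
  case (Suc n)
  let ?B = "B n" and ?W = "W - B n"
  let ?F = "{A. A \<subseteq> ?W \<and> (\<forall>l<n. \<not> B l \<subseteq> A)}"
  have B: "?B \<subseteq> W" "card ?B = m" using Suc.prems(2) by simp_all
  have "finite ?B" using finite_subset[OF B(1) Suc.prems(1)] .
  have Bl: "B l \<subseteq> ?W" "card (B l) = m" "B l \<inter> ?B = {}" if "l < n" for l
  proof -
    have "l < Suc n" "l \<noteq> n" using that by simp_all
    then show "B l \<subseteq> W - ?B" "card (B l) = m" "B l \<inter> ?B = {}"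
      using Suc.prems(2,3) by blast+
  qed
  have "size_gf {A. A \<subseteq> W \<and> (\<forall>l<Suc n. \<not> B l \<subseteq> A)} =
      size_gf ((\<lambda>(A, C). A \<union> C) ` (?F \<times> (Pow ?B - {?B})))"
    using avoiding_Suc_eq_join[of B n W, OF B(1) Bl(3)] by simp
  also have "\<dots> = size_gf ?F * size_gf (Pow ?B - {?B})"
    using Suc.prems(1) \<open>finite ?B\<close> by (intro size_gf_join[where U = ?W and U' = ?B]) auto
  moreover have "size_gf ?F = binomial_head m ^ n * [:1, 1:] ^ (card ?W - n * m)"
    using Suc.prems(1,3) Bl(1,2) by (intro Suc.IH) auto
  moreover have "card ?W - n * m = card W - Suc n * m"
    using B \<open>finite ?B\<close> by (simp add: card_Diff_subset)
  ultimately show ?case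
    using B \<open>finite ?B\<close> by (simp add: size_gf_proper_subsets)
qed

lemma degree_binomial_head: "0 < m \<Longrightarrow> degree (binomial_head m) = m - 1"
  and lead_coeff_binomial_head: "0 < m \<Longrightarrow> lead_coeff (binomial_head m) = int m"
proof -
  assume "0 < m"
  have coeff: "coeff (binomial_head m) j = (if j < m then int (m choose j) else 0)" for j
    unfolding binomial_head_def coeff_sum by (simp add: monom_altdef[symmetric] mult.commute)
  have "degree (binomial_head m) = m - 1"
    using \<open>0 < m\<close> by (intro antisym degree_le le_degree) (auto simp: coeff)
  then show "degree (binomial_head m) = m - 1" "lead_coeff (binomial_head m) = int m"
    using \<open>0 < m\<close> binomial_symmetric[of 1 m] by (simp_all add: coeff)
qed

lemma finite_SR_complex: "finite V \<Longrightarrow> finite (SR_complex V J)"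
  unfolding SR_complex_def by (rule finite_subset[of _ "Pow V"]) auto

lemma SR_complex_det_size_gf:
  assumes "0 < m"
  shows "size_gf (SR_complex (vars m k) (LM_ideal (S_ring m k) (I_det m k :: 'a::field mpoly set))) =
    binomial_head m ^ k * [:1, 1:] ^ (k * (m^2 - m))"
proof -
  have "lead_vars m l \<subseteq> vars m k" "card (lead_vars m l) = m" if "l < k" for l
    unfolding lead_vars_def card_term_vars
    by (rule term_vars_subset_vars[OF lead_perm_permutes[OF assms] lead_level_in_level_funs[OF assms that]]) simp
  then have "size_gf {A. A \<subseteq> vars m k \<and> (\<forall>l<k. \<not> lead_vars m l \<subseteq> A)} =
      binomial_head m ^ k * [:1, 1:] ^ (card (vars m k) - k * m)"
    using finite_vars lead_vars_disjoint by (intro size_gf_avoiding) auto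
  moreover have "card (vars m k) - k * m = k * (m^2 - m)"
    unfolding card_vars by (simp add: power2_eq_square diff_mult_distrib2)
  ultimately show ?thesis by (simp add: SR_complex_det[OF assms])
qed

lemma empty_in_SR_complex_det:
  "0 < m \<Longrightarrow> {} \<in> SR_complex (vars m k) (LM_ideal (S_ring m k) (I_det m k :: 'a::field mpoly set))"
  by (auto simp: SR_complex_det lead_vars_def term_vars_def)

lemma degree_binomial_head_power_mult:
    "0 < m \<Longrightarrow> degree (binomial_head m ^ k * [:1, 1:] ^ b) = k * (m - 1) + b"
  and lead_coeff_binomial_head_power_mult:
    "0 < m \<Longrightarrow> lead_coeff (binomial_head m ^ k * [:1, 1:] ^ b) = int m ^ k"
proof -
  assume m: "0 < m"
  then have "binomial_head m \<noteq> 0" using lead_coeff_binomial_head[OF m] by auto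
  then show "degree (binomial_head m ^ k * [:1, 1:] ^ b) = k * (m - 1) + b"
    using m by (simp add: degree_mult_eq degree_power_eq degree_binomial_head)
  show "lead_coeff (binomial_head m ^ k * [:1, 1:] ^ b) = int m ^ k"
    by (simp add: lead_coeff_mult lead_coeff_power lead_coeff_binomial_head[OF m])
qed

theorem proposition3p7:
  fixes m k :: nat
  defines "b \<equiv> k * (m^2 - m)"
    and "\<Delta> \<equiv> SR_complex (vars m k) (LM_ideal (S_ring m k) (I_det m k :: 'a::alg_closed_field mpoly set))"
  assumes "m \<ge> 2" and "k \<ge> 1"
  shows "sc_dim \<Delta> = int (k * (m^2 - 1)) - 1
    \<and> (\<forall>l. 1 \<le> l \<and> l \<le> k * (m^2 - 1) \<longrightarrow>
           int (f_vec \<Delta> l) = coeff ((\<Sum>j<m. [:0, 1:] ^ j * [:int (m choose j):]) ^ k * [:1, 1:] ^ b) l)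
    \<and> f_vec \<Delta> (k * (m^2 - 1)) = m ^ k"
proof -
  \<comment> \<open>only \<open>m > 0\<close> is needed\<close>
  have m: "0 < m" using assms(3) by simp
  let ?G = "binomial_head m ^ k * [:1, 1:] ^ b"
  have gf: "size_gf \<Delta> = ?G"
    unfolding \<Delta>_def b_def by (rule SR_complex_det_size_gf[OF m])
  have finite: "finite \<Delta>" and "\<Delta> \<noteq> {}"
    unfolding \<Delta>_def using finite_SR_complex[OF finite_vars] empty_in_SR_complex_det[OF m] by blast+
  have "k * (m - 1) + b = k * (m^2 - 1)"
    using m unfolding b_def power2_eq_square by (simp add: algebra_simps diff_mult_distrib2)
  then have deg: "degree ?G = k * (m^2 - 1)"
    using degree_binomial_head_power_mult[OF m] by simp
  have f_vec: "int (f_vec \<Delta> l) = coeff ?G l" for l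
    using coeff_size_gf[OF finite, of l] gf by simp
  moreover have "coeff ?G (k * (m^2 - 1)) = int (m ^ k)"
    unfolding deg[symmetric] using lead_coeff_binomial_head_power_mult[OF m] by simp
  ultimately have "f_vec \<Delta> (k * (m^2 - 1)) = m ^ k"
    by (metis of_nat_eq_iff)
  moreover have "(\<Sum>j<m. [:0, 1:] ^ j * [:int (m choose j):]) ^ k * [:1, 1:] ^ b = ?G"
    by (simp add: binomial_head_def)
  ultimately show ?thesis
    using f_vec sc_dim_eq_degree_size_gf[OF finite \<open>\<Delta> \<noteq> {}\<close>] gf deg by simp
qed

end
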